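(* Consider an $n\times n$ input-queued switch (setting in the context) operating under a scheduling policy that achieves state space collapse. Let $\mathbf D=\mathbf B^T\mathbf B$ with columns $\mathbf d_1,\dots,\mathbf d_{2n}$, and $\Phi=\{\boldsymbol\phi\in\mathbb C^{2n}:\mathrm{Re}(\mathbf d_l^T\boldsymbol\phi)\le0\ \forall l\}$. Let $\tilde{\boldsymbol\theta}\in\mathbb C^{n^2}$, let $\boldsymbol\theta$ be its projection onto $\mathcal S$ (real and imaginary parts separately), and suppose $\boldsymbol\theta=\mathbf B\boldsymbol\phi$ with $\boldsymbol\phi\in\Phi$. Write $\langle\mathbf x,\mathbf q\rangle=\sum_kx_kq_k$. Then, with all expectations under the stationary distribution: 1. $\lim_{\epsilon\to0}|\mathbb E[e^{\epsilon\langle\tilde{\boldsymbol\theta},\mathbf q\rangle}]|<\infty$ and $\lim_{\epsilon\to0}\frac1\epsilon|\mathbb E[u_ke^{\epsilon\langle\tilde{\boldsymbol\theta},\mathbf q\rangle}]|<\infty$ for all $k\in\{1,\dots,n^2\}$; the same holds with $\tilde{\boldsymbol\theta}$ replaced by $\boldsymbol\theta$; 2. if $\mathbf r\in\mathbb R^{2n}_+$ is (a random vector) such that $\mathbf q_{\|\mathcal K}=\mathbf B\mathbf r$, then $\lim_{\epsilon\to0}\mathbb E[e^{\epsilon\langle\tilde{\boldsymbol\theta},\mathbf q\rangle}]=\lim_{\epsilon\to0}\mathbb E[e^{\epsilon\langle\boldsymbol\theta,\mathbf q\rangle}]=\lim_{\epsilon\to0}\mathbb E[e^{\epsilon\sum_{l=1}^{2n}(\mathbf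 d_l^T\boldsymbol\phi)r_l}]$; 3. with $\mathbf r$ as in 2, for every $k=i+n(j-1)$, $i,j\in\{1,\dots,n\}$: $\lim_{\epsilon\to0}\frac1\epsilon\mathbb E[u_ke^{\epsilon\langle\tilde{\boldsymbol\theta},\mathbf q\rangle}]=\lim_{\epsilon\to0}\frac1\epsilon\mathbb E[u_ke^{\epsilon\langle\boldsymbol\theta,\mathbf q\rangle}]=\lim_{\epsilon\to0}\frac1\epsilon\mathbb E\big[u_ke^{\epsilon\sum_{l\notin\{i,n+j\}}(\mathbf d_l^T\boldsymbol\phi)r_l}\big]$.
   Context: Input-queued switch of size $n$: discrete time, $n^2$ queues indexed by $k=i+n(j-1)$, $i,j\in\{1,\dots,n\}$; arrivals $\mathbf a(t)\in\mathbb Z_{\ge0}^{n^2}$ i.i.d. over $t$, bounded by $a_{\max}$, mean $\boldsymbol\lambda$, diagonal covariance; schedules $\mathcal X=\{\mathbf s\in\{0,1\}^{n^2}:\sum_i s_{i+n(j-1)}=1\ \forall j,\sum_js_{i+n(j-1)}=1\ \forall i\}$; $\mathbf q(t+1)=[\mathbf q(t)+\mathbf a(t)-\mathbf s(t)]^+=\mathbf q(t)+\mathbf a(t)-\mathbf s(t)+\mathbf u(t)$ with unused service $\mathbf u(t)\in\{0,1\}^{n^2}$ ($u_k=1$ iff $s_k=1$, $a_k=0$, $q_k=0$). The chain is irreducible, aperiodic, positive recurrent; $\mathbf q$ is stationary, $\mathbf u$ the unused service in a step from stationarity. $\boldsymbol\lambda=(1-\epsilon)\boldsymbol\nu$, $\boldsymbol\nu\ge0$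 with all row sums $\sum_j\nu_{i+n(j-1)}$ and column sums $\sum_i\nu_{i+n(j-1)}$ equal to $1$, $\min_k\nu_k>0$. $\mathbf B\in\{0,1\}^{n^2\times2n}$ with $B_{i+n(j-1),i}=B_{i+n(j-1),n+j}=1$, other entries $0$; $\mathcal S=\{\mathbf B\mathbf w:\mathbf w\in\mathbb R^{2n}\}$; $\mathcal K=\{\mathbf B\mathbf r:\mathbf r\in\mathbb R^{2n}_+\}$; $\mathbf q_\perp$ and $\mathbf q_{\perp\mathcal K}$ are $\mathbf q$ minus its projections $\mathbf q_\|$ onto $\mathcal S$ and $\mathbf q_{\|\mathcal K}$ onto $\mathcal K$. State space collapse: for every $\theta\in\mathbb R$ there are $\epsilon(\theta)>0$, $C^\star<\infty$ with $\mathbb E[e^{\epsilon\theta\|\mathbf q_\perp\|}]\le\mathbb E[e^{\epsilon\theta\|\mathbf q_{\perp\mathcal K}\|}]<C^\star$ for $0<\epsilon\le\epsilon(\theta)$, and for each $r\ge1$, $\mathbb E\|\mathbf q_\perp\|^r\le\mathbb E\|\mathbf q_{\perp\mathcal K}\|^r\le C_r$ independent of $\epsilon$. *)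

theory Defs
  imports "HOL-Probability.Probability"
begin

text \<open>Input-queued switch. Queues are indexed by pairs (i,j) of the finite type 'n
  (the paper's k = i + n(j-1)); the 2n indices of B are Inl i (row i) and Inr j
  (the paper's n+j).\<close>

type_synonym 'n qstate = "'n \<times> 'n \<Rightarrow> nat"

definition is_schedule :: "('n::finite) qstate \<Rightarrow> bool" where
  "is_schedule s \<longleftrightarrow> (\<forall>k. s k \<le> 1) \<and> (\<forall>j. (\<Sum>i\<in>UNIV. s (i, j)) = 1)
     \<and> (\<forall>i. (\<Sum>j\<in>UNIV. s (i, j)) = 1)"

definition unused :: "'n qstate \<Rightarrow> 'n qstate \<Rightarrow> 'n qstate \<Rightarrow> 'n qstate" where
  "unused q a s = (\<lambda>k. if s k = 1 \<and> a k = 0 \<and> q k = 0 then 1 else 0)"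

text \<open>q(t+1) = [q + a - s]^+ (truncated subtraction on nat)\<close>
definition next_state :: "'n qstate \<Rightarrow> 'n qstate \<Rightarrow> 'n qstate \<Rightarrow> 'n qstate" where
  "next_state q a s = (\<lambda>k. (q k + a k) - s k)"

text \<open>Joint law of (q(t), a(t), s(t)) in one step started from the law P of q(t):
  arrivals independent of q, schedule drawn from the policy sigma given q.\<close>
definition step_pmf :: "'n qstate pmf \<Rightarrow> 'n qstate pmf \<Rightarrow> ('n qstate \<Rightarrow> 'n qstate pmf)
    \<Rightarrow> ('n qstate \<times> 'n qstate \<times> 'n qstate) pmf" where
  "step_pmf P A \<sigma> = do { q \<leftarrow> P; a \<leftarrow> A; s \<leftarrow> \<sigma> q; return_pmf (q, a, s) }"

definition Bmat :: "'n \<times> 'n \<Rightarrow> 'n + 'n \<Rightarrow> real" where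
  "Bmat k l = (case l of Inl i \<Rightarrow> (if fst k = i then 1 else 0)
                       | Inr j \<Rightarrow> (if snd k = j then 1 else 0))"

definition Bvec :: "('n + 'n \<Rightarrow> real) \<Rightarrow> real ^ ('n::finite \<times> 'n)" where
  "Bvec w = (\<chi> k. w (Inl (fst k)) + w (Inr (snd k)))"

definition Dmat :: "'n::finite + 'n \<Rightarrow> 'n + 'n \<Rightarrow> real" where
  "Dmat l m = (\<Sum>k\<in>UNIV. Bmat k l * Bmat k m)"

definition dphi :: "('n::finite + 'n \<Rightarrow> complex) \<Rightarrow> 'n + 'n \<Rightarrow> complex" where
  "dphi \<phi> l = (\<Sum>m\<in>UNIV. complex_of_real (Dmat l m) * \<phi> m)"

definition subspaceS :: "(real ^ ('n::finite \<times> 'n)) set" where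
  "subspaceS = range Bvec"

definition coneK :: "(real ^ ('n::finite \<times> 'n)) set" where
  "coneK = Bvec ` {w. \<forall>l. 0 \<le> w l}"

definition qvec :: "('n::finite) qstate \<Rightarrow> real ^ ('n \<times> 'n)" where
  "qvec q = (\<chi> k. real (q k))"

definition q_perpK :: "('n::finite) qstate \<Rightarrow> real ^ ('n \<times> 'n)" where
  "q_perpK q = qvec q - closest_point coneK (qvec q)"

definition proj_S_c :: "('n::finite \<times> 'n \<Rightarrow> complex) \<Rightarrow> 'n \<times> 'n \<Rightarrow> complex" where
  "proj_S_c x = (\<lambda>k. Complex (closest_point subspaceS (\<chi> k'. Re (x k')) $ k)
                             (closest_point subspaceS (\<chi> k'. Im (x k')) $ k))"

definition inner_c :: "('n::finite \<times> 'n \<Rightarrow> complex) \<Rightarrow> 'n qstate \<Rightarrow> complex" where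
  "inner_c x q = (\<Sum>k\<in>UNIV. x k * of_nat (q k))"

end

theory Submission
  imports Defs
begin

(* Write q = B r + q_perpK q with r >= 0 the coefficients of the projection of q onto the cone K.
   Since proj_S_c theta_tilde = B phi and theta_tilde - proj_S_c theta_tilde is orthogonal to S,
   both exponents agree on B r, where they equal sum_l (d_l^T phi) r_l, a number with nonpositive
   real part because phi lies in Phi. Each exponent therefore differs from this cone part by at
   most eps M |q_perpK q| (M = exponent_bound), and |e^a - e^b| <= |a - b| e^|a - b| for Re b <= 0
   bounds every difference of integrands by eps M Y, where Y = |q_perpK q| e^(eps M |q_perpK q|)
   is perp_weight. State space collapse keeps E[Y^2] bounded as eps -> 0, so these differences
   are O(eps). For the terms weighted by the unused service, the drift of the row sums of q gives
   E[u_k] <= eps; moreover u_ij = 1 forces q_ij = 0 and hence r_i, r_(n+j) <= |q_perpK q|, which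
   is why those two terms may be dropped. The bound u Y <= u / sqrt eps + sqrt eps Y^2 then makes
   the weighted differences O(eps^(3/2)). *)

section \<open>Exponentials and expectations\<close>

lemma sum_UNIV_Plus:
  fixes g :: "'a::finite + 'b::finite \<Rightarrow> 'c::comm_monoid_add"
  shows "(\<Sum>l\<in>UNIV. g l) = (\<Sum>i\<in>UNIV. g (Inl i)) + (\<Sum>j\<in>UNIV. g (Inr j))"
  by (subst UNIV_Plus_UNIV[symmetric], subst sum.Plus) (auto simp: o_def)

lemma eventually_at_right_0_below:
  "0 < b \<Longrightarrow> \<forall>\<^sub>F \<epsilon> in at_right 0. 0 < \<epsilon> \<and> \<epsilon> < (b::real)"
  unfolding eventually_at_right_field by blast

lemma closest_point_subspace_orthogonal:
  fixes S :: "'a::euclidean_space set"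
  assumes "subspace S" "x \<in> S"
  shows "inner (v - closest_point S v) x = 0"
proof -
  let ?c = "closest_point S v"
  have closed: "closed S" and convex: "convex S"
    using assms(1) by (simp_all add: closed_subspace subspace_imp_convex)
  have "?c \<in> S"
    using closed subspace_0[OF assms(1)] by (blast intro: closest_point_in_set)
  then have "?c + x \<in> S" "?c - x \<in> S"
    using assms by (simp_all add: subspace_add subspace_diff)
  then have "inner (v - ?c) ((?c + x) - ?c) \<le> 0" "inner (v - ?c) ((?c - x) - ?c) \<le> 0"
    by (simp_all only: closest_point_dot[OF convex closed])
  then show ?thesis by (simp add: inner_diff_right)
qed

lemma norm_exp_diff_le:
  fixes a b :: complex
  assumes "Re b \<le> 0" "norm (a - b) \<le> t"
  shows "norm (exp a - exp b) \<le> t * exp t"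
proof -
  have "exp a - exp b = exp b * (exp (a - b) - 1)"
    by (simp add: algebra_simps flip: exp_add)
  then have "norm (exp a - exp b) = exp (Re b) * norm (exp (a - b) - 1)"
    by (simp add: norm_mult)
  also have "\<dots> \<le> norm (exp (a - b) - 1)"
    using assms(1) by (simp add: mult_left_le_one_le)
  also have "\<dots> \<le> exp (norm (a - b)) * norm (a - b)"
    using Taylor_exp_field[of "a - b" 0] by simp
  also have "\<dots> \<le> exp t * t"
    using assms(2) by (intro mult_mono) auto
  finally show ?thesis by (simp add: mult.commute)
qed

lemma exp_le_one_plus_mult_exp:
  fixes y :: real
  assumes "0 \<le> y"
  shows "exp y \<le> 1 + y * exp y"
proof -
  have "(1 - y) * exp y \<le> exp (- y) * exp y"
    using exp_ge_add_one_self[of "- y"] by (intro mult_right_mono) auto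
  then show ?thesis by (simp add: algebra_simps flip: exp_add)
qed

lemma integrable_pmf_bounded:
  fixes p :: "'a pmf" and f :: "'a \<Rightarrow> 'b::{banach,second_countable_topology}"
  assumes "\<And>y. y \<in> set_pmf p \<Longrightarrow> norm (f y) \<le> B"
  shows "integrable p f"
  by (rule measure_pmf.integrable_const_bound[where B=B]) (use assms in \<open>auto simp: AE_measure_pmf_iff\<close>)

lemma pmf_integral_dominated:
  fixes p :: "'a pmf" and f :: "'a \<Rightarrow> 'b::{banach,second_countable_topology}"
  assumes g: "integrable p g" and le: "\<And>y. y \<in> set_pmf p \<Longrightarrow> norm (f y) \<le> g y"
  shows "integrable p f" "norm (measure_pmf.expectation p f) \<le> measure_pmf.expectation p g"
proof -
  have "\<forall>y\<in>set_pmf p. norm (f y) \<le> norm (g y)"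
    using le by (metis abs_ge_self order_trans real_norm_def)
  then have "AE y in measure_pmf p. norm (f y) \<le> norm (g y)"
    by (simp add: AE_measure_pmf_iff)
  then show f: "integrable p f"
    by (rule Bochner_Integration.integrable_bound[OF g, rotated]) simp
  have "norm (measure_pmf.expectation p f) \<le> measure_pmf.expectation p (\<lambda>y. norm (f y))"
    by (rule Bochner_Integration.integral_norm_bound)
  also have "\<dots> \<le> measure_pmf.expectation p g"
    using f g le by (intro integral_mono_AE) (auto simp: AE_measure_pmf_iff)
  finally show "norm (measure_pmf.expectation p f) \<le> measure_pmf.expectation p g" .
qed

lemma expectation_mult_le_sqrt:
  fixes p :: "'a pmf" and u h :: "'a \<Rightarrow> real"
  assumes "0 < \<epsilon>" and u: "\<And>y. 0 \<le> u y \<and> u y \<le> 1" and Eu: "measure_pmf.expectation p u \<le> \<epsilon>"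
    and h: "\<And>y. 0 \<le> h y" and h2: "integrable p (\<lambda>y. h y ^ 2)"
  shows "integrable p (\<lambda>y. u y * h y)"
    and "measure_pmf.expectation p (\<lambda>y. u y * h y) \<le> sqrt \<epsilon> * (1 + measure_pmf.expectation p (\<lambda>y. h y ^ 2))"
proof -
  define s where "s = sqrt \<epsilon>"
  have s: "0 < s" "\<epsilon> / s = s"
    using \<open>0 < \<epsilon>\<close> by (simp_all add: s_def real_div_sqrt)
  have int_u: "integrable p u"
    using u by (intro integrable_pmf_bounded[where B=1]) auto
  have pw: "u y * h y \<le> u y / s + s * h y ^ 2" for y
  proof -
    have "0 \<le> (s * h y - 1) ^ 2" by simp
    then have "2 * (s * h y) \<le> (s * h y) ^ 2 + 1" by (simp add: power2_diff)
    moreover have "0 \<le> s * h y" using s(1) h[of y] by simp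
    ultimately have "s * h y \<le> (s * h y) ^ 2 + 1" by linarith
    then have "h y \<le> ((s * h y) ^ 2 + 1) / s"
      using s(1) by (simp add: le_divide_eq mult.commute)
    also have "\<dots> = 1 / s + s * h y ^ 2"
      using s(1) by (simp add: field_simps power2_eq_square)
    finally have "u y * h y \<le> u y * (1 / s + s * h y ^ 2)"
      using u[of y] by (simp add: mult_left_mono)
    also have "\<dots> = u y / s + u y * (s * h y ^ 2)"
      by (simp add: algebra_simps)
    also have "u y * (s * h y ^ 2) \<le> s * h y ^ 2"
      using u[of y] s(1) by (intro mult_left_le_one_le) auto
    finally show ?thesis by simp
  qed
  have int_bound: "integrable p (\<lambda>y. u y / s + s * h y ^ 2)"
    using int_u h2 by simp
  show int_uh: "integrable p (\<lambda>y. u y * h y)"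
    using u h pw by (intro pmf_integral_dominated(1)[OF int_bound]) auto
  have "measure_pmf.expectation p (\<lambda>y. u y * h y) \<le> measure_pmf.expectation p (\<lambda>y. u y / s + s * h y ^ 2)"
    using int_uh int_bound pw by (rule integral_mono)
  also have "\<dots> = measure_pmf.expectation p u / s + s * measure_pmf.expectation p (\<lambda>y. h y ^ 2)"
    using int_u h2 by simp
  also have "\<dots> \<le> \<epsilon> / s + s * measure_pmf.expectation p (\<lambda>y. h y ^ 2)"
    using Eu s(1) by (simp add: divide_right_mono)
  also have "\<dots> = s * (1 + measure_pmf.expectation p (\<lambda>y. h y ^ 2))"
    using s(2) by (simp add: algebra_simps)
  finally show "measure_pmf.expectation p (\<lambda>y. u y * h y)
      \<le> sqrt \<epsilon> * (1 + measure_pmf.expectation p (\<lambda>y. h y ^ 2))"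
    by (simp add: s_def)
qed

lemma stationary_bounded_drift_nonpos:
  fixes S :: "'a pmf" and X :: "'s \<Rightarrow> real" and cur nxt :: "'a \<Rightarrow> 's" and \<Delta> :: "'a \<Rightarrow> real"
  assumes stat: "map_pmf nxt S = map_pmf cur S"
    and X: "\<And>x. 0 \<le> X x"
    and step: "\<And>y. y \<in> set_pmf S \<Longrightarrow> X (nxt y) = X (cur y) + \<Delta> y"
    and bdd: "\<And>y. y \<in> set_pmf S \<Longrightarrow> \<bar>\<Delta> y\<bar> \<le> c"
  shows "measure_pmf.expectation S \<Delta> \<le> 0"
proof -
  define tail where "tail M = measure S {y. real M - c < X (cur y)}" for M :: nat
  have int_\<Delta>: "integrable S \<Delta>"
    using bdd by (intro integrable_pmf_bounded[where B=c]) auto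
  \<comment> \<open>X need not be integrable: use stationarity for min (X x) M and let M grow\<close>
  have bound: "measure_pmf.expectation S \<Delta> \<le> c * tail M" for M
  proof -
    define T where "T r = min r (real M)" for r
    define ind :: "'a \<Rightarrow> real" where "ind = indicator {y. real M - c < X (cur y)}"
    have int_T: "integrable S (\<lambda>y. T (X (x y)))" for x :: "'a \<Rightarrow> 's"
      using X by (intro integrable_pmf_bounded[where B="real M"]) (simp add: T_def)
    have int_ind: "integrable S ind"
      by (intro integrable_pmf_bounded[where B=1]) (simp add: ind_def)
    have "measure_pmf.expectation S (\<lambda>y. T (X (nxt y))) = measure_pmf.expectation S (\<lambda>y. T (X (cur y)))"
      using integral_map_pmf[of nxt S "\<lambda>x. T (X x)"] integral_map_pmf[of cur S "\<lambda>x. T (X x)"] stat by simp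
    moreover have "\<Delta> y - c * ind y \<le> T (X (nxt y)) - T (X (cur y))" if "y \<in> set_pmf S" for y
    proof (cases "real M - c < X (cur y)")
      case True
      have "T (X (cur y)) + min (\<Delta> y) 0 \<le> T (X (nxt y))"
        unfolding T_def step[OF that] by linarith
      then show ?thesis
        using True bdd[OF that] by (simp add: ind_def)
    next
      case False
      then have "X (nxt y) \<le> real M" "X (cur y) \<le> real M"
        using step[OF that] bdd[OF that] X[of "cur y"] by linarith+
      then show ?thesis
        using False by (simp add: ind_def T_def step[OF that])
    qed
    then have "measure_pmf.expectation S (\<lambda>y. \<Delta> y - c * ind y)
        \<le> measure_pmf.expectation S (\<lambda>y. T (X (nxt y)) - T (X (cur y)))"
      using int_\<Delta> int_ind int_T by (intro integral_mono_AE) (auto simp: AE_measure_pmf_iff)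
    moreover have "measure_pmf.expectation S ind = tail M"
      by (simp add: ind_def tail_def)
    ultimately show ?thesis
      using int_\<Delta> int_ind int_T by simp
  qed
  have "tail \<longlonglongrightarrow> measure S (\<Inter>M. {y. real M - c < X (cur y)})"
    unfolding tail_def by (rule measure_pmf.finite_Lim_measure_decseq) (auto simp: decseq_def)
  moreover have "(\<Inter>M. {y. real M - c < X (cur y)}) = {}"
  proof -
    have "y \<notin> (\<Inter>M. {y. real M - c < X (cur y)})" for y
    proof -
      obtain M :: nat where "X (cur y) + c < real M"
        using reals_Archimedean2 by blast
      then show ?thesis by (auto intro!: exI[of _ M])
    qed
    then show ?thesis by blast
  qed
  ultimately have "(\<lambda>M. c * tail M) \<longlonglongrightarrow> 0"
    using tendsto_mult[OF tendsto_const[of c], of tail 0] by simp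
  with bound show ?thesis
    by (intro tendsto_le[OF trivial_limit_sequentially _ tendsto_const]) auto
qed

section \<open>The matrix B, the subspace S and the cone K\<close>

definition Bcol :: "'n::finite + 'n \<Rightarrow> real ^ ('n \<times> 'n)" where
  "Bcol l = Bvec (\<lambda>m. if m = l then 1 else 0)"

lemma Bvec_eq_sum_Bcol: "Bvec w = (\<Sum>l\<in>UNIV. w l *\<^sub>R Bcol l)"
proof -
  have "(\<Sum>l\<in>UNIV. w l * (Bcol l $ k))
      = (\<Sum>l\<in>UNIV. if Inl (fst k) = l then w l else 0) + (\<Sum>l\<in>UNIV. if Inr (snd k) = l then w l else 0)" for k
    by (subst sum.distrib[symmetric]) (auto intro!: sum.cong simp: Bcol_def Bvec_def)
  then show ?thesis
    by (simp add: vec_eq_iff sum_component Bvec_def)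
qed

lemma Bvec_0: "Bvec (\<lambda>l. 0) = 0"
  and Bvec_add: "Bvec (\<lambda>l. w l + w' l) = Bvec w + Bvec w'"
  and Bvec_scaleR: "Bvec (\<lambda>l. c * w l) = c *\<^sub>R Bvec w"
  by (simp_all add: Bvec_def vec_eq_iff algebra_simps)

lemma convex_cone_coneK: "convex_cone (coneK :: (real ^ ('n::finite \<times> 'n)) set)"
  unfolding convex_cone_iff coneK_def
proof (intro conjI ballI allI impI)
  show "0 \<in> Bvec ` {w. \<forall>l. 0 \<le> w l}"
    by (rule image_eqI[of _ _ "\<lambda>l. 0"]) (auto simp: Bvec_0)
next
  fix x y :: "real ^ ('n \<times> 'n)" assume "x \<in> Bvec ` {w. \<forall>l. 0 \<le> w l}" "y \<in> Bvec ` {w. \<forall>l. 0 \<le> w l}"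
  then obtain w w' where "x = Bvec w" "y = Bvec w'" "\<forall>l. 0 \<le> w l" "\<forall>l. 0 \<le> w' l" by auto
  then show "x + y \<in> Bvec ` {w. \<forall>l. 0 \<le> w l}"
    by (intro image_eqI[of _ _ "\<lambda>l. w l + w' l"]) (auto simp: Bvec_add)
next
  fix x :: "real ^ ('n \<times> 'n)" and c :: real assume "x \<in> Bvec ` {w. \<forall>l. 0 \<le> w l}" "0 \<le> c"
  then obtain w where "x = Bvec w" "\<forall>l. 0 \<le> w l" by auto
  then show "c *\<^sub>R x \<in> Bvec ` {w. \<forall>l. 0 \<le> w l}"
    using \<open>0 \<le> c\<close> by (intro image_eqI[of _ _ "\<lambda>l. c * w l"]) (auto simp: Bvec_scaleR)
qed

lemma coneK_eq_convex_cone_hull: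
  "(coneK :: (real ^ ('n::finite \<times> 'n)) set) = convex_cone hull (range Bcol)"
proof
  show "convex_cone hull (range Bcol) \<subseteq> (coneK :: (real ^ ('n \<times> 'n)) set)"
  proof (rule hull_minimal)
    show "range Bcol \<subseteq> (coneK :: (real ^ ('n \<times> 'n)) set)"
      unfolding coneK_def Bcol_def by auto
  qed (rule convex_cone_coneK)
  have "(\<Sum>l\<in>F. w l *\<^sub>R Bcol l) \<in> convex_cone hull (range Bcol)"
    if "\<forall>l. 0 \<le> w l" "finite F" for w :: "'n + 'n \<Rightarrow> real" and F
    using that(2)
  proof induction
    case empty
    then show ?case by (simp add: convex_cone_hull_contains_0)
  next
    case (insert l F)
    then show ?case
      using that(1) by (simp add: convex_cone_hull_add convex_cone_hull_mul hull_inc)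
  qed
  then show "(coneK :: (real ^ ('n \<times> 'n)) set) \<subseteq> convex_cone hull (range Bcol)"
    unfolding coneK_def by (auto simp: Bvec_eq_sum_Bcol)
qed

lemma subspace_subspaceS: "subspace (subspaceS :: (real ^ ('n::finite \<times> 'n)) set)"
  unfolding subspace_def subspaceS_def
proof (intro conjI ballI allI)
  show "0 \<in> range Bvec" by (metis Bvec_0 rangeI)
next
  fix x y :: "real ^ ('n \<times> 'n)" assume "x \<in> range Bvec" "y \<in> range Bvec"
  then obtain w w' where "x = Bvec w" "y = Bvec w'" by auto
  then show "x + y \<in> range Bvec" by (metis Bvec_add rangeI)
next
  fix c :: real and x :: "real ^ ('n \<times> 'n)" assume "x \<in> range Bvec"
  then obtain w where "x = Bvec w" by auto
  then show "c *\<^sub>R x \<in> range Bvec" by (metis Bvec_scaleR rangeI)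
qed

definition cinner :: "('k::finite \<Rightarrow> complex) \<Rightarrow> real ^ 'k \<Rightarrow> complex" where
  "cinner z y = (\<Sum>k\<in>UNIV. z k * complex_of_real (y $ k))"

lemma inner_c_eq_cinner: "inner_c z q = cinner z (qvec q)"
  by (simp add: inner_c_def cinner_def qvec_def)

lemma cinner_add_right: "cinner z (x + y) = cinner z x + cinner z y"
  by (simp add: cinner_def sum.distrib algebra_simps)

lemma Re_cinner: "Re (cinner z y) = inner (\<chi> k. Re (z k)) y"
  and Im_cinner: "Im (cinner z y) = inner (\<chi> k. Im (z k)) y"
  by (simp_all add: cinner_def inner_vec_def Re_sum Im_sum)

lemma norm_cinner_le: "norm (cinner z y) \<le> (\<Sum>k\<in>UNIV. norm (z k)) * norm y"
proof -
  have "norm (cinner z y) \<le> (\<Sum>k\<in>UNIV. norm (z k * complex_of_real (y $ k)))"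
    unfolding cinner_def by (rule norm_sum)
  also have "\<dots> \<le> (\<Sum>k\<in>UNIV. norm (z k) * norm y)"
    by (intro sum_mono) (simp add: norm_mult mult_left_mono component_le_norm_cart)
  finally show ?thesis by (simp add: sum_distrib_right)
qed

lemma cinner_proj_S_c_Bvec: "cinner (proj_S_c x) (Bvec w) = cinner x (Bvec w)"
proof -
  have "inner (closest_point subspaceS v) (Bvec w) = inner v (Bvec w)" for v :: "real ^ ('a \<times> 'a)"
    using closest_point_subspace_orthogonal[OF subspace_subspaceS, of "Bvec w" v]
    by (simp add: subspaceS_def inner_diff_left)
  moreover have "(\<chi> k. Re (proj_S_c x k)) = closest_point subspaceS (\<chi> k. Re (x k))"
    and "(\<chi> k. Im (proj_S_c x k)) = closest_point subspaceS (\<chi> k. Im (x k))"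
    by (simp_all add: proj_S_c_def vec_eq_iff)
  ultimately show ?thesis
    by (simp add: complex_eq_iff Re_cinner Im_cinner)
qed

lemma sum_Bmat:
  fixes f :: "'n::finite + 'n \<Rightarrow> complex"
  shows "(\<Sum>l\<in>UNIV. complex_of_real (Bmat k l) * f l) = f (Inl (fst k)) + f (Inr (snd k))"
proof -
  have "(\<Sum>i\<in>UNIV. complex_of_real (Bmat k (Inl i)) * f (Inl i))
      = (\<Sum>i\<in>UNIV. if fst k = i then f (Inl i) else 0)"
    by (rule sum.cong) (auto simp: Bmat_def)
  moreover have "(\<Sum>j\<in>UNIV. complex_of_real (Bmat k (Inr j)) * f (Inr j))
      = (\<Sum>j\<in>UNIV. if snd k = j then f (Inr j) else 0)"
    by (rule sum.cong) (auto simp: Bmat_def)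
  ultimately show ?thesis by (simp add: sum_UNIV_Plus)
qed

lemma dphi_eq_sum_Bmat:
  "dphi \<phi> l = (\<Sum>k\<in>UNIV. complex_of_real (Bmat k l) * (\<phi> (Inl (fst k)) + \<phi> (Inr (snd k))))"
proof -
  have "dphi \<phi> l = (\<Sum>m\<in>UNIV. \<Sum>k\<in>UNIV. complex_of_real (Bmat k l) * (complex_of_real (Bmat k m) * \<phi> m))"
    by (simp add: dphi_def Dmat_def sum_distrib_right mult.assoc)
  also have "\<dots> = (\<Sum>k\<in>UNIV. complex_of_real (Bmat k l) * (\<Sum>m\<in>UNIV. complex_of_real (Bmat k m) * \<phi> m))"
    by (subst sum.swap) (simp add: sum_distrib_left)
  finally show ?thesis by (simp add: sum_Bmat)
qed

lemma cinner_Bvec_eq_dphi: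
  assumes "\<forall>k. x k = \<phi> (Inl (fst k)) + \<phi> (Inr (snd k))"
  shows "cinner x (Bvec w) = (\<Sum>l\<in>UNIV. dphi \<phi> l * complex_of_real (w l))"
proof -
  have "(\<Sum>l\<in>UNIV. dphi \<phi> l * complex_of_real (w l))
      = (\<Sum>l\<in>UNIV. \<Sum>k\<in>UNIV. x k * (complex_of_real (Bmat k l) * complex_of_real (w l)))"
    by (simp add: dphi_eq_sum_Bmat assms sum_distrib_left sum_distrib_right mult_ac)
  also have "\<dots> = (\<Sum>k\<in>UNIV. x k * (\<Sum>l\<in>UNIV. complex_of_real (Bmat k l) * complex_of_real (w l)))"
    by (subst sum.swap) (simp add: sum_distrib_left)
  also have "\<dots> = cinner x (Bvec w)"
    by (simp add: sum_Bmat cinner_def Bvec_def)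
  finally show ?thesis ..
qed

(* The coefficients w are the paper's r with q_{||K} = B r. *)
definition cone_coords :: "('n::finite) qstate \<Rightarrow> ('n + 'n \<Rightarrow> real) \<Rightarrow> bool" where
  "cone_coords q w \<longleftrightarrow> (\<forall>l. 0 \<le> w l) \<and> Bvec w = closest_point coneK (qvec q)"

lemma cone_coords_exists:
  fixes q :: "('n::finite) qstate"
  shows "\<exists>w. cone_coords q w"
proof -
  have "closed (coneK :: (real ^ ('n \<times> 'n)) set)"
    unfolding coneK_eq_convex_cone_hull by (rule closed_convex_cone_hull) simp
  then have "closest_point coneK (qvec q) \<in> coneK"
    by (rule closest_point_in_set) (use convex_cone_coneK convex_cone_nonempty in blast)
  then show ?thesis unfolding coneK_def cone_coords_def by auto
qed

lemma qvec_eq_Bvec_plus_perp: "cone_coords q w \<Longrightarrow> qvec q = Bvec w + q_perpK q"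
  by (simp add: cone_coords_def q_perpK_def)

lemma cone_coords_le_norm_perp:
  assumes "cone_coords q w" "q (i, j) = 0"
  shows "w (Inl i) \<le> norm (q_perpK q)" "w (Inr j) \<le> norm (q_perpK q)"
proof -
  have "qvec q $ (i, j) = Bvec w $ (i, j) + q_perpK q $ (i, j)"
    using qvec_eq_Bvec_plus_perp[OF assms(1)] by simp
  then have "w (Inl i) + w (Inr j) = - q_perpK q $ (i, j)"
    using assms(2) by (simp add: qvec_def Bvec_def)
  moreover have "\<bar>q_perpK q $ (i, j)\<bar> \<le> norm (q_perpK q)"
    by (rule component_le_norm_cart)
  ultimately show "w (Inl i) \<le> norm (q_perpK q)" "w (Inr j) \<le> norm (q_perpK q)"
    using assms(1) unfolding cone_coords_def by (smt (verit))+
qed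

section \<open>Unused service\<close>

lemma set_step_pmf:
  "(q, a, s) \<in> set_pmf (step_pmf P A \<sigma>) \<longleftrightarrow> q \<in> set_pmf P \<and> a \<in> set_pmf A \<and> s \<in> set_pmf (\<sigma> q)"
  by (auto simp: step_pmf_def)

lemma map_fst_step_pmf: "map_pmf fst (step_pmf P A \<sigma>) = P"
  by (simp add: step_pmf_def map_bind_pmf bind_return_pmf')

lemma map_arrivals_step_pmf: "map_pmf (\<lambda>y. fst (snd y)) (step_pmf P A \<sigma>) = A"
  by (simp add: step_pmf_def map_bind_pmf bind_return_pmf')

lemma unused_cases: "unused q a s k = 0 \<or> unused q a s k = 1"
  by (simp add: unused_def)

lemma unused_imp_empty: "unused q a s k = 1 \<Longrightarrow> q k = 0"
  by (metis unused_def zero_neq_one)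

lemma next_state_plus_schedule:
  "s k \<le> 1 \<Longrightarrow> next_state q a s k + s k = q k + a k + unused q a s k"
  by (auto simp: next_state_def unused_def)

lemma expectation_unused_le:
  fixes P :: "('n::finite) qstate pmf" and \<nu> :: "'n \<times> 'n \<Rightarrow> real"
  assumes sched: "\<forall>q. \<forall>s\<in>set_pmf (\<sigma> q). is_schedule s"
    and arr_bound: "\<forall>a\<in>set_pmf A. \<forall>k. a k \<le> amax"
    and arr_mean: "\<forall>k. measure_pmf.expectation A (\<lambda>a. real (a k)) = (1 - \<epsilon>) * \<nu> k"
    and nu_rows: "\<forall>i. (\<Sum>j\<in>UNIV. \<nu> (i, j)) = 1"
    and stationary: "map_pmf (\<lambda>(q, a, s). next_state q a s) (step_pmf P A \<sigma>) = P"
  shows "measure_pmf.expectation (step_pmf P A \<sigma>) (\<lambda>(q, a, s). real (unused q a s (i, j))) \<le> \<epsilon>"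
proof -
  let ?S = "step_pmf P A \<sigma>"
  define row :: "'n qstate \<Rightarrow> real" where "row q = (\<Sum>j\<in>UNIV. real (q (i, j)))" for q
  define arr :: "'n qstate \<times> 'n qstate \<times> 'n qstate \<Rightarrow> real" where "arr = (\<lambda>(q, a, s). row a)"
  define idle :: "'n qstate \<times> 'n qstate \<times> 'n qstate \<Rightarrow> real" where "idle = (\<lambda>(q, a, s). row (unused q a s))"
  define \<Delta> where "\<Delta> y = arr y + idle y - 1" for y
  have row_arrivals: "0 \<le> row a \<and> row a \<le> real CARD('n) * real amax" if "a \<in> set_pmf A" for a
    using arr_bound that sum_bounded_above[of UNIV "\<lambda>j. real (a (i, j))" "real amax"]
    by (simp add: row_def sum_nonneg)
  have row_unused: "0 \<le> row (unused q a s) \<and> row (unused q a s) \<le> real CARD('n)" for q a s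
    using sum_bounded_above[of UNIV "\<lambda>j. real (unused q a s (i, j))" 1]
    by (simp add: row_def sum_nonneg unused_def)
  have "measure_pmf.expectation ?S \<Delta> \<le> 0"
  proof (rule stationary_bounded_drift_nonpos
      [where cur=fst and nxt="\<lambda>(q, a, s). next_state q a s" and X=row])
    show "map_pmf (\<lambda>(q, a, s). next_state q a s) ?S = map_pmf fst ?S"
      by (simp add: stationary map_fst_step_pmf)
    fix y assume y: "y \<in> set_pmf ?S"
    obtain q a s where y_eq: "y = (q, a, s)" by (cases y)
    have sched_s: "is_schedule s" and a: "a \<in> set_pmf A"
      using y sched by (auto simp: y_eq set_step_pmf)
    then have "(\<Sum>j\<in>UNIV. next_state q a s (i, j) + s (i, j))
        = (\<Sum>j\<in>UNIV. q (i, j) + a (i, j) + unused q a s (i, j))"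
      by (intro sum.cong refl next_state_plus_schedule) (simp add: is_schedule_def)
    then have "real (\<Sum>j\<in>UNIV. next_state q a s (i, j) + s (i, j))
        = real (\<Sum>j\<in>UNIV. q (i, j) + a (i, j) + unused q a s (i, j))"
      by (rule arg_cong)
    with sched_s show "row ((\<lambda>(q, a, s). next_state q a s) y) = row (fst y) + \<Delta> y"
      by (simp add: row_def \<Delta>_def arr_def idle_def y_eq sum.distrib is_schedule_def)
    show "\<bar>\<Delta> y\<bar> \<le> real CARD('n) * real amax + real CARD('n) + 1"
      using row_arrivals[OF a] row_unused[of q a s] by (simp add: \<Delta>_def arr_def idle_def y_eq abs_le_iff)
  qed (simp add: row_def sum_nonneg)
  moreover have int_arr: "integrable ?S arr"
    using row_arrivals by (intro integrable_pmf_bounded[where B="real CARD('n) * real amax"])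
      (auto simp: arr_def set_step_pmf)
  moreover have int_idle: "integrable ?S idle"
    using row_unused by (intro integrable_pmf_bounded[where B="real CARD('n)"]) (auto simp: idle_def)
  moreover have "measure_pmf.expectation ?S arr = 1 - \<epsilon>"
  proof -
    have "measure_pmf.expectation ?S arr = measure_pmf.expectation A row"
      using integral_map_pmf[of "\<lambda>y. fst (snd y)" ?S row]
      by (simp add: map_arrivals_step_pmf arr_def split_beta')
    also have "\<dots> = (\<Sum>j\<in>UNIV. measure_pmf.expectation A (\<lambda>a. real (a (i, j))))"
      unfolding row_def using arr_bound
      by (intro Bochner_Integration.integral_sum integrable_pmf_bounded[where B="real amax"]) auto
    finally show ?thesis
      using nu_rows by (simp add: arr_mean flip: sum_distrib_left)
  qed
  ultimately have "measure_pmf.expectation ?S idle \<le> \<epsilon>"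
    by (simp add: \<Delta>_def[abs_def] Bochner_Integration.integral_diff Bochner_Integration.integral_add)
  moreover have "measure_pmf.expectation ?S (\<lambda>(q, a, s). real (unused q a s (i, j)))
      \<le> measure_pmf.expectation ?S idle"
  proof (rule integral_mono[OF _ int_idle])
    show "integrable ?S (\<lambda>(q, a, s). real (unused q a s (i, j)))"
      by (intro integrable_pmf_bounded[where B=1]) (auto simp: unused_def)
    show "(\<lambda>(q, a, s). real (unused q a s (i, j))) y \<le> idle y" for y
      by (auto simp: idle_def row_def split: prod.split intro!: member_le_sum)
  qed
  ultimately show ?thesis by linarith
qed

section \<open>Bounds on the exponents\<close>

locale exponent_in_Phi =
  fixes \<theta>t :: "'n::finite \<times> 'n \<Rightarrow> complex" and \<phi> :: "'n + 'n \<Rightarrow> complex"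
  assumes theta_eq: "\<forall>k. proj_S_c \<theta>t k = \<phi> (Inl (fst k)) + \<phi> (Inr (snd k))"
    and phi_in_Phi: "\<forall>l. Re (dphi \<phi> l) \<le> 0"
begin

definition exponent_bound :: real where
  "exponent_bound = (\<Sum>k\<in>UNIV. norm (\<theta>t k)) + (\<Sum>k\<in>UNIV. norm (proj_S_c \<theta>t k)) + (\<Sum>l\<in>UNIV. norm (dphi \<phi> l))"

lemma exponent_bound_nonneg: "0 \<le> exponent_bound"
  by (simp add: exponent_bound_def sum_nonneg)

lemma sum_norm_le_exponent_bound:
  assumes "z \<in> {\<theta>t, proj_S_c \<theta>t}"
  shows "(\<Sum>k\<in>UNIV. norm (z k)) \<le> exponent_bound"
  using assms by (auto simp: exponent_bound_def sum_nonneg add_increasing add_increasing2)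

lemma Re_dphi_sum_nonpos:
  assumes "\<forall>l. 0 \<le> w l"
  shows "Re (\<Sum>l\<in>F. dphi \<phi> l * complex_of_real (w l)) \<le> 0"
  using assms phi_in_Phi by (simp add: Re_sum sum_nonpos mult_nonpos_nonneg)

lemma norm_exp_dphi_sum_le_one:
  assumes "\<forall>l. 0 \<le> w l" "0 \<le> \<epsilon>"
  shows "norm (exp (complex_of_real \<epsilon> * (\<Sum>l\<in>F. dphi \<phi> l * complex_of_real (w l)))) \<le> 1"
  using Re_dphi_sum_nonpos[OF assms(1), of F] assms(2) by (simp add: mult_nonneg_nonpos)

lemma inner_c_eq_dphi_sum_plus_perp:
  assumes "cone_coords q w" "z \<in> {\<theta>t, proj_S_c \<theta>t}"
  shows "inner_c z q = (\<Sum>l\<in>UNIV. dphi \<phi> l * complex_of_real (w l)) + cinner z (q_perpK q)"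
proof -
  have "inner_c z q = cinner z (Bvec w) + cinner z (q_perpK q)"
    by (simp add: inner_c_eq_cinner cinner_add_right qvec_eq_Bvec_plus_perp[OF assms(1)])
  moreover have "cinner z (Bvec w) = cinner (proj_S_c \<theta>t) (Bvec w)"
    using assms(2) by (auto simp: cinner_proj_S_c_Bvec)
  ultimately show ?thesis
    by (simp add: cinner_Bvec_eq_dphi[OF theta_eq])
qed

lemma norm_inner_c_minus_dphi_sum_le:
  assumes "cone_coords q w" "z \<in> {\<theta>t, proj_S_c \<theta>t}"
  shows "norm (inner_c z q - (\<Sum>l\<in>UNIV. dphi \<phi> l * complex_of_real (w l)))
    \<le> exponent_bound * norm (q_perpK q)"
  using inner_c_eq_dphi_sum_plus_perp[OF assms] norm_cinner_le[of z "q_perpK q"]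
    mult_right_mono[OF sum_norm_le_exponent_bound[OF assms(2)] norm_ge_zero[of "q_perpK q"]]
  by simp

lemma norm_inner_c_minus_dphi_sum_without_le:
  assumes "cone_coords q w" "q (i, j) = 0"
  shows "norm (inner_c (proj_S_c \<theta>t) q - (\<Sum>l\<in>UNIV - {Inl i, Inr j}. dphi \<phi> l * complex_of_real (w l)))
    \<le> exponent_bound * norm (q_perpK q)"
proof -
  let ?x = "norm (q_perpK q)"
  let ?d = "\<lambda>l. dphi \<phi> l * complex_of_real (w l)"
  have "inner_c (proj_S_c \<theta>t) q - (\<Sum>l\<in>UNIV - {Inl i, Inr j}. ?d l)
      = ?d (Inl i) + ?d (Inr j) + cinner (proj_S_c \<theta>t) (q_perpK q)"
    using inner_c_eq_dphi_sum_plus_perp[OF assms(1), of "proj_S_c \<theta>t"]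
    by (simp add: sum.subset_diff[of "{Inl i, Inr j}" UNIV])
  also have "norm \<dots> \<le> norm (dphi \<phi> (Inl i)) * ?x + norm (dphi \<phi> (Inr j)) * ?x
      + (\<Sum>k\<in>UNIV. norm (proj_S_c \<theta>t k)) * ?x"
  proof -
    have "norm (?d (Inl i)) \<le> norm (dphi \<phi> (Inl i)) * ?x" "norm (?d (Inr j)) \<le> norm (dphi \<phi> (Inr j)) * ?x"
      using cone_coords_le_norm_perp[OF assms] assms(1)
      by (auto simp: norm_mult cone_coords_def intro!: mult_left_mono)
    then show ?thesis
      using norm_cinner_le[of "proj_S_c \<theta>t" "q_perpK q"] by (smt (verit) norm_triangle_ineq)
  qed
  also have "\<dots> \<le> exponent_bound * ?x"
  proof -
    have "norm (dphi \<phi> (Inl i)) + norm (dphi \<phi> (Inr j)) \<le> (\<Sum>l\<in>UNIV. norm (dphi \<phi> l))"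
      using sum_mono2[of UNIV "{Inl i, Inr j}" "\<lambda>l. norm (dphi \<phi> l)"] by simp
    then have "norm (dphi \<phi> (Inl i)) + norm (dphi \<phi> (Inr j)) + (\<Sum>k\<in>UNIV. norm (proj_S_c \<theta>t k))
        \<le> exponent_bound"
      by (simp add: exponent_bound_def sum_nonneg add_increasing)
    from mult_right_mono[OF this norm_ge_zero[of "q_perpK q"]] show ?thesis
      by (simp add: algebra_simps)
  qed
  finally show ?thesis .
qed

lemma Re_inner_c_le:
  assumes "z \<in> {\<theta>t, proj_S_c \<theta>t}"
  shows "Re (inner_c z q) \<le> exponent_bound * norm (q_perpK q)"
proof -
  obtain w where w: "cone_coords q w" using cone_coords_exists by blast
  let ?G = "\<Sum>l\<in>UNIV. dphi \<phi> l * complex_of_real (w l)"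
  have "Re ?G \<le> 0"
    by (rule Re_dphi_sum_nonpos) (use w in \<open>simp add: cone_coords_def\<close>)
  moreover have "Re (inner_c z q - ?G) \<le> exponent_bound * norm (q_perpK q)"
    using norm_inner_c_minus_dphi_sum_le[OF w assms] complex_Re_le_cmod order_trans by blast
  ultimately show ?thesis by simp
qed

definition perp_weight :: "real \<Rightarrow> 'n qstate \<Rightarrow> real" where
  "perp_weight \<epsilon> q = norm (q_perpK q) * exp (\<epsilon> * exponent_bound * norm (q_perpK q))"

lemma perp_weight_nonneg: "0 \<le> perp_weight \<epsilon> q"
  by (simp add: perp_weight_def)

lemma norm_exp_inner_c_le:
  assumes "0 \<le> \<epsilon>" "z \<in> {\<theta>t, proj_S_c \<theta>t}"
  shows "norm (exp (complex_of_real \<epsilon> * inner_c z q)) \<le> 1 + \<epsilon> * exponent_bound * perp_weight \<epsilon> q"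
proof -
  let ?t = "\<epsilon> * exponent_bound * norm (q_perpK q)"
  have "norm (exp (complex_of_real \<epsilon> * inner_c z q)) = exp (\<epsilon> * Re (inner_c z q))"
    by simp
  also have "\<dots> \<le> exp ?t"
    using mult_left_mono[OF Re_inner_c_le[OF assms(2)] assms(1)] by (simp add: mult.assoc)
  also have "\<dots> \<le> 1 + ?t * exp ?t"
    using assms(1) exponent_bound_nonneg by (intro exp_le_one_plus_mult_exp) simp
  finally show ?thesis by (simp add: perp_weight_def mult.assoc)
qed

lemma norm_exp_minus_exp_dphi_sum_le:
  assumes "0 \<le> \<epsilon>" "\<forall>l. 0 \<le> w l"
    and "norm (a - (\<Sum>l\<in>F. dphi \<phi> l * complex_of_real (w l))) \<le> exponent_bound * norm (q_perpK q)"
  shows "norm (exp (complex_of_real \<epsilon> * a)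
      - exp (complex_of_real \<epsilon> * (\<Sum>l\<in>F. dphi \<phi> l * complex_of_real (w l))))
    \<le> \<epsilon> * exponent_bound * perp_weight \<epsilon> q"
proof -
  let ?G = "\<Sum>l\<in>F. dphi \<phi> l * complex_of_real (w l)"
  have "Re (complex_of_real \<epsilon> * ?G) \<le> 0"
    using Re_dphi_sum_nonpos[OF assms(2)] assms(1) by (simp add: mult_nonneg_nonpos)
  moreover have "norm (complex_of_real \<epsilon> * a - complex_of_real \<epsilon> * ?G)
      \<le> \<epsilon> * exponent_bound * norm (q_perpK q)"
    using mult_left_mono[OF assms(3,1)] assms(1)
    by (simp add: norm_mult mult.assoc flip: right_diff_distrib)
  ultimately have "norm (exp (complex_of_real \<epsilon> * a) - exp (complex_of_real \<epsilon> * ?G))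
      \<le> (\<epsilon> * exponent_bound * norm (q_perpK q)) * exp (\<epsilon> * exponent_bound * norm (q_perpK q))"
    by (rule norm_exp_diff_le)
  then show ?thesis by (simp add: perp_weight_def mult.assoc)
qed

lemma norm_exp_inner_c_minus_dphi_sum_le:
  assumes "0 \<le> \<epsilon>" "cone_coords q w" "z \<in> {\<theta>t, proj_S_c \<theta>t}"
  shows "norm (exp (complex_of_real \<epsilon> * inner_c z q)
      - exp (complex_of_real \<epsilon> * (\<Sum>l\<in>UNIV. dphi \<phi> l * complex_of_real (w l))))
    \<le> \<epsilon> * exponent_bound * perp_weight \<epsilon> q"
  using assms norm_inner_c_minus_dphi_sum_le
  by (intro norm_exp_minus_exp_dphi_sum_le) (auto simp: cone_coords_def)

lemma norm_exp_inner_c_minus_dphi_sum_without_le: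
  assumes "0 \<le> \<epsilon>" "cone_coords q w" "q (i, j) = 0"
  shows "norm (exp (complex_of_real \<epsilon> * inner_c (proj_S_c \<theta>t) q)
      - exp (complex_of_real \<epsilon> * (\<Sum>l\<in>UNIV - {Inl i, Inr j}. dphi \<phi> l * complex_of_real (w l))))
    \<le> \<epsilon> * exponent_bound * perp_weight \<epsilon> q"
  using assms norm_inner_c_minus_dphi_sum_without_le
  by (intro norm_exp_minus_exp_dphi_sum_le) (auto simp: cone_coords_def)

lemma norm_exp_theta_tilde_minus_theta_le:
  assumes "0 \<le> \<epsilon>"
  shows "norm (exp (complex_of_real \<epsilon> * inner_c \<theta>t q) - exp (complex_of_real \<epsilon> * inner_c (proj_S_c \<theta>t) q))
    \<le> 2 * \<epsilon> * exponent_bound * perp_weight \<epsilon> q"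
proof -
  obtain w where w: "cone_coords q w" using cone_coords_exists by blast
  let ?E = "exp (complex_of_real \<epsilon> * (\<Sum>l\<in>UNIV. dphi \<phi> l * complex_of_real (w l)))"
  have "norm (exp (complex_of_real \<epsilon> * inner_c \<theta>t q) - exp (complex_of_real \<epsilon> * inner_c (proj_S_c \<theta>t) q))
      \<le> norm (exp (complex_of_real \<epsilon> * inner_c \<theta>t q) - ?E)
        + norm (exp (complex_of_real \<epsilon> * inner_c (proj_S_c \<theta>t) q) - ?E)"
    by (rule norm_diff_triangle_le[OF order_refl]) (simp add: norm_minus_commute)
  also have "\<dots> \<le> \<epsilon> * exponent_bound * perp_weight \<epsilon> q + \<epsilon> * exponent_bound * perp_weight \<epsilon> q"
    using assms w by (intro add_mono norm_exp_inner_c_minus_dphi_sum_le) auto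
  finally show ?thesis by simp
qed

lemma perp_weight_sq_le:
  "perp_weight \<epsilon> q ^ 2 \<le> norm (q_perpK q) ^ 4 + exp (\<epsilon> * (4 * exponent_bound) * norm (q_perpK q))"
proof -
  let ?x = "norm (q_perpK q)" and ?t = "\<epsilon> * exponent_bound * norm (q_perpK q)"
  have "2 * (?x ^ 2 * exp (2 * ?t)) \<le> (?x ^ 2) ^ 2 + exp (2 * ?t) ^ 2"
    using sum_squares_bound[of "?x ^ 2" "exp (2 * ?t)"] by simp
  moreover have "perp_weight \<epsilon> q ^ 2 = ?x ^ 2 * exp (2 * ?t)"
    by (simp add: perp_weight_def power_mult_distrib exp_double)
  moreover have "exp (2 * ?t) ^ 2 = exp (\<epsilon> * (4 * exponent_bound) * ?x)" "(?x ^ 2) ^ 2 = ?x ^ 4"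
    by (simp_all flip: exp_double power_mult)
  moreover have "0 \<le> ?x ^ 2 * exp (2 * ?t)"
    by simp
  ultimately show ?thesis by linarith
qed

end

section \<open>Asymptotics under state space collapse\<close>

(* S eps stands for the joint law of (q, a, s) in one step started from the stationary law pi eps. *)
locale ssc_transform = exponent_in_Phi \<theta>t \<phi>
  for \<theta>t :: "'n::finite \<times> 'n \<Rightarrow> complex" and \<phi> :: "'n + 'n \<Rightarrow> complex" +
  fixes \<pi> :: "real \<Rightarrow> 'n qstate pmf"
    and S :: "real \<Rightarrow> ('n qstate \<times> 'n qstate \<times> 'n qstate) pmf"
  assumes marginal: "\<And>\<epsilon>. map_pmf fst (S \<epsilon>) = \<pi> \<epsilon>"
    and unused_small: "\<forall>\<^sub>F \<epsilon> in at_right 0.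
      \<forall>k. measure_pmf.expectation (S \<epsilon>) (\<lambda>(q, a, s). real (unused q a s k)) \<le> \<epsilon>"
    and collapse_exp: "\<And>\<eta>. \<exists>C. \<forall>\<^sub>F \<epsilon> in at_right 0.
      integrable (\<pi> \<epsilon>) (\<lambda>q. exp (\<epsilon> * \<eta> * norm (q_perpK q))) \<and>
      measure_pmf.expectation (\<pi> \<epsilon>) (\<lambda>q. exp (\<epsilon> * \<eta> * norm (q_perpK q))) \<le> C"
    and collapse_fourth_moment: "\<exists>C. \<forall>\<^sub>F \<epsilon> in at_right 0.
      integrable (\<pi> \<epsilon>) (\<lambda>q. norm (q_perpK q) ^ 4) \<and>
      measure_pmf.expectation (\<pi> \<epsilon>) (\<lambda>q. norm (q_perpK q) ^ 4) \<le> C"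
begin

definition collapse_bounds :: "real \<Rightarrow> real \<Rightarrow> bool" where
  "collapse_bounds C \<epsilon> \<longleftrightarrow> 0 < \<epsilon> \<and> \<epsilon> < 1
     \<and> (\<forall>k. measure_pmf.expectation (S \<epsilon>) (\<lambda>(q, a, s). real (unused q a s k)) \<le> \<epsilon>)
     \<and> integrable (\<pi> \<epsilon>) (\<lambda>q. perp_weight \<epsilon> q ^ 2)
     \<and> measure_pmf.expectation (\<pi> \<epsilon>) (\<lambda>q. perp_weight \<epsilon> q ^ 2) \<le> C"

lemma eventually_collapse_bounds: "\<exists>C. \<forall>\<^sub>F \<epsilon> in at_right 0. collapse_bounds C \<epsilon>"
proof -
  obtain C4 where C4: "\<forall>\<^sub>F \<epsilon> in at_right 0. integrable (\<pi> \<epsilon>) (\<lambda>q. norm (q_perpK q) ^ 4) \<and>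
      measure_pmf.expectation (\<pi> \<epsilon>) (\<lambda>q. norm (q_perpK q) ^ 4) \<le> C4"
    using collapse_fourth_moment by blast
  obtain CE where CE: "\<forall>\<^sub>F \<epsilon> in at_right 0.
      integrable (\<pi> \<epsilon>) (\<lambda>q. exp (\<epsilon> * (4 * exponent_bound) * norm (q_perpK q))) \<and>
      measure_pmf.expectation (\<pi> \<epsilon>) (\<lambda>q. exp (\<epsilon> * (4 * exponent_bound) * norm (q_perpK q))) \<le> CE"
    using collapse_exp by blast
  have "\<forall>\<^sub>F \<epsilon> in at_right 0. \<epsilon> < (1::real)"
    unfolding eventually_at_right_field by (intro exI[of _ 1]) auto
  with C4 CE unused_small eventually_at_right_less[of 0]
  have "\<forall>\<^sub>F \<epsilon> in at_right 0. collapse_bounds (C4 + CE) \<epsilon>"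
  proof eventually_elim
    case (elim \<epsilon>)
    let ?W = "\<lambda>q. norm (q_perpK q) ^ 4 + exp (\<epsilon> * (4 * exponent_bound) * norm (q_perpK q))"
    have W: "integrable (\<pi> \<epsilon>) ?W" "measure_pmf.expectation (\<pi> \<epsilon>) ?W \<le> C4 + CE"
      using elim by (simp_all add: Bochner_Integration.integral_add)
    have "integrable (\<pi> \<epsilon>) (\<lambda>q. perp_weight \<epsilon> q ^ 2)"
      using perp_weight_sq_le by (intro pmf_integral_dominated(1)[OF W(1)]) simp
    moreover have "measure_pmf.expectation (\<pi> \<epsilon>) (\<lambda>q. perp_weight \<epsilon> q ^ 2) \<le> C4 + CE"
      using integral_mono[OF calculation W(1) perp_weight_sq_le] W(2) by linarith
    ultimately show ?case
      using elim by (simp add: collapse_bounds_def)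
  qed
  then show ?thesis by blast
qed

lemma collapse_boundsD:
  assumes "collapse_bounds C \<epsilon>"
  shows "0 < \<epsilon>" "\<epsilon> < 1"
    "measure_pmf.expectation (S \<epsilon>) (\<lambda>(q, a, s). real (unused q a s k)) \<le> \<epsilon>"
    "integrable (\<pi> \<epsilon>) (\<lambda>q. perp_weight \<epsilon> q ^ 2)"
    "measure_pmf.expectation (\<pi> \<epsilon>) (\<lambda>q. perp_weight \<epsilon> q ^ 2) \<le> C"
  using assms unfolding collapse_bounds_def by blast+

lemma collapse_bounds_nonneg: "collapse_bounds C \<epsilon> \<Longrightarrow> 0 \<le> C"
  using Bochner_Integration.integral_nonneg[of "\<pi> \<epsilon>" "\<lambda>q. perp_weight \<epsilon> q ^ 2"] collapse_boundsD(5)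
  by (meson order_trans zero_le_power2)

lemma expectation_perp_weight_le:
  assumes "collapse_bounds C \<epsilon>"
  shows "integrable (\<pi> \<epsilon>) (perp_weight \<epsilon>)" "measure_pmf.expectation (\<pi> \<epsilon>) (perp_weight \<epsilon>) \<le> 1 + C"
proof -
  have le: "perp_weight \<epsilon> q \<le> 1 + perp_weight \<epsilon> q ^ 2" for q
    using sum_squares_bound[of "perp_weight \<epsilon> q" 1] perp_weight_nonneg[of \<epsilon> q] by simp
  have int: "integrable (\<pi> \<epsilon>) (\<lambda>q. 1 + perp_weight \<epsilon> q ^ 2)"
    using collapse_boundsD(4)[OF assms] by simp
  show "integrable (\<pi> \<epsilon>) (perp_weight \<epsilon>)"
    using le perp_weight_nonneg by (intro pmf_integral_dominated(1)[OF int]) simp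
  then have "measure_pmf.expectation (\<pi> \<epsilon>) (perp_weight \<epsilon>)
      \<le> measure_pmf.expectation (\<pi> \<epsilon>) (\<lambda>q. 1 + perp_weight \<epsilon> q ^ 2)"
    using int le by (rule integral_mono)
  also have "\<dots> \<le> 1 + C"
    using collapse_boundsD(4,5)[OF assms] by simp
  finally show "measure_pmf.expectation (\<pi> \<epsilon>) (perp_weight \<epsilon>) \<le> 1 + C" .
qed

lemma expectation_unused_perp_weight_le:
  assumes "collapse_bounds C \<epsilon>"
  shows "integrable (S \<epsilon>) (\<lambda>(q, a, s). real (unused q a s k) * perp_weight \<epsilon> q)"
    "measure_pmf.expectation (S \<epsilon>) (\<lambda>(q, a, s). real (unused q a s k) * perp_weight \<epsilon> q) \<le> sqrt \<epsilon> * (1 + C)"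
proof -
  let ?u = "\<lambda>(q, a, s). real (unused q a s k)" and ?h = "\<lambda>(q, a, s). perp_weight \<epsilon> q"
  have eq: "(\<lambda>(q, a, s). real (unused q a s k) * perp_weight \<epsilon> q) = (\<lambda>y. ?u y * ?h y)"
    by auto
  have u: "0 \<le> ?u y \<and> ?u y \<le> 1" and h: "0 \<le> ?h y" for y
    by (auto simp: unused_def perp_weight_nonneg split: prod.split)
  have "integrable (S \<epsilon>) (\<lambda>y. ?h y ^ 2)"
    using collapse_boundsD(4)[OF assms] by (simp add: split_beta' flip: marginal)
  note bound =
    expectation_mult_le_sqrt[OF collapse_boundsD(1)[OF assms] u collapse_boundsD(3)[OF assms] h this]
  have "measure_pmf.expectation (S \<epsilon>) (\<lambda>y. ?h y ^ 2) \<le> C"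
    using collapse_boundsD(5)[OF assms] by (simp add: split_beta' flip: marginal)
  then have "sqrt \<epsilon> * (1 + measure_pmf.expectation (S \<epsilon>) (\<lambda>y. ?h y ^ 2)) \<le> sqrt \<epsilon> * (1 + C)"
    using collapse_boundsD(1)[OF assms] by (intro mult_left_mono) auto
  with bound show "integrable (S \<epsilon>) (\<lambda>(q, a, s). real (unused q a s k) * perp_weight \<epsilon> q)"
    "measure_pmf.expectation (S \<epsilon>) (\<lambda>(q, a, s). real (unused q a s k) * perp_weight \<epsilon> q) \<le> sqrt \<epsilon> * (1 + C)"
    unfolding eq by simp_all
qed

lemma mgf_bound_at:
  assumes "collapse_bounds C \<epsilon>" "z \<in> {\<theta>t, proj_S_c \<theta>t}"
  shows "integrable (\<pi> \<epsilon>) (\<lambda>q. exp (complex_of_real \<epsilon> * inner_c z q)) \<and>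
    norm (measure_pmf.expectation (\<pi> \<epsilon>) (\<lambda>q. exp (complex_of_real \<epsilon> * inner_c z q)))
      \<le> 1 + exponent_bound * (1 + C)"
proof -
  let ?g = "\<lambda>q. 1 + \<epsilon> * exponent_bound * perp_weight \<epsilon> q"
  have \<epsilon>: "0 < \<epsilon>" "\<epsilon> < 1" using collapse_boundsD[OF assms(1)] by simp_all
  have int: "integrable (\<pi> \<epsilon>) ?g"
    using expectation_perp_weight_le(1)[OF assms(1)] by simp
  have "measure_pmf.expectation (\<pi> \<epsilon>) ?g = 1 + \<epsilon> * exponent_bound * measure_pmf.expectation (\<pi> \<epsilon>) (perp_weight \<epsilon>)"
    using expectation_perp_weight_le(1)[OF assms(1)] by simp
  also have "\<dots> \<le> 1 + 1 * exponent_bound * (1 + C)"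
    using \<epsilon> expectation_perp_weight_le(2)[OF assms(1)] exponent_bound_nonneg
      Bochner_Integration.integral_nonneg[OF perp_weight_nonneg]
    by (intro add_left_mono mult_mono) auto
  finally show ?thesis
    using pmf_integral_dominated[OF int norm_exp_inner_c_le[OF less_imp_le[OF \<epsilon>(1)] assms(2)]] by simp
qed

lemma unused_mgf_bound_at:
  assumes "collapse_bounds C \<epsilon>" "z \<in> {\<theta>t, proj_S_c \<theta>t}"
  shows "integrable (S \<epsilon>) (\<lambda>(q, a, s). of_nat (unused q a s k) * exp (complex_of_real \<epsilon> * inner_c z q)) \<and>
    norm (measure_pmf.expectation (S \<epsilon>)
      (\<lambda>(q, a, s). of_nat (unused q a s k) * exp (complex_of_real \<epsilon> * inner_c z q))) / \<epsilon>
      \<le> 1 + exponent_bound * (1 + C)"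
proof -
  let ?u = "\<lambda>(q, a, s). real (unused q a s k)"
  let ?uY = "\<lambda>(q, a, s). real (unused q a s k) * perp_weight \<epsilon> q"
  let ?g = "\<lambda>y. ?u y + \<epsilon> * exponent_bound * ?uY y"
  have \<epsilon>: "0 < \<epsilon>" "\<epsilon> < 1" using collapse_boundsD[OF assms(1)] by simp_all
  have int_u: "integrable (S \<epsilon>) ?u"
    by (intro integrable_pmf_bounded[where B=1]) (auto simp: unused_def)
  have int: "integrable (S \<epsilon>) ?g"
    using int_u expectation_unused_perp_weight_le(1)[OF assms(1)] by simp
  have "norm (of_nat (unused q a s k) * exp (complex_of_real \<epsilon> * inner_c z q))
      \<le> ?g (q, a, s)" for q a s
    using norm_exp_inner_c_le[OF less_imp_le[OF \<epsilon>(1)] assms(2), of q]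
    by (auto simp: unused_def algebra_simps)
  then have "\<And>y. norm ((\<lambda>(q, a, s). of_nat (unused q a s k) * exp (complex_of_real \<epsilon> * inner_c z q)) y)
      \<le> ?g y"
    by (simp add: split_beta')
  note dominated = pmf_integral_dominated[OF int this]
  have "norm (measure_pmf.expectation (S \<epsilon>)
      (\<lambda>(q, a, s). of_nat (unused q a s k) * exp (complex_of_real \<epsilon> * inner_c z q)))
      \<le> measure_pmf.expectation (S \<epsilon>) ?g"
    by (rule dominated(2))
  also have "measure_pmf.expectation (S \<epsilon>) ?g
      = measure_pmf.expectation (S \<epsilon>) ?u + \<epsilon> * exponent_bound * measure_pmf.expectation (S \<epsilon>) ?uY"
    using int_u expectation_unused_perp_weight_le(1)[OF assms(1)] by simp
  also have "\<dots> \<le> \<epsilon> + \<epsilon> * exponent_bound * (1 + C)"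
  proof -
    have "sqrt \<epsilon> * (1 + C) \<le> 1 + C"
      using \<epsilon> collapse_bounds_nonneg[OF assms(1)] by (intro mult_left_le_one_le) auto
    then have "measure_pmf.expectation (S \<epsilon>) ?uY \<le> 1 + C"
      using expectation_unused_perp_weight_le(2)[OF assms(1), of k] by linarith
    then show ?thesis
      using collapse_boundsD(3)[OF assms(1), of k] \<epsilon> exponent_bound_nonneg
      by (intro add_mono mult_left_mono) auto
  qed
  finally show ?thesis
    using dominated(1) \<epsilon> by (simp add: divide_le_eq algebra_simps)
qed

lemma mgf_diff_le_at:
  fixes f g :: "'n qstate \<Rightarrow> complex"
  assumes "collapse_bounds C \<epsilon>" "integrable (\<pi> \<epsilon>) f" "integrable (\<pi> \<epsilon>) g"
    and "\<And>q. norm (f q - g q) \<le> c * \<epsilon> * perp_weight \<epsilon> q" and "0 \<le> c"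
  shows "norm (measure_pmf.expectation (\<pi> \<epsilon>) f - measure_pmf.expectation (\<pi> \<epsilon>) g) \<le> c * \<epsilon> * (1 + C)"
proof -
  have "norm (measure_pmf.expectation (\<pi> \<epsilon>) f - measure_pmf.expectation (\<pi> \<epsilon>) g)
      = norm (measure_pmf.expectation (\<pi> \<epsilon>) (\<lambda>q. f q - g q))"
    using assms(2,3) by simp
  also have "\<dots> \<le> measure_pmf.expectation (\<pi> \<epsilon>) (\<lambda>q. c * \<epsilon> * perp_weight \<epsilon> q)"
    using expectation_perp_weight_le(1)[OF assms(1)] assms(4)
    by (intro pmf_integral_dominated(2)) auto
  also have "\<dots> \<le> c * \<epsilon> * (1 + C)"
    using expectation_perp_weight_le(2)[OF assms(1)] collapse_boundsD(1)[OF assms(1)] assms(5)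
    by (simp add: mult_left_mono)
  finally show ?thesis .
qed

lemma unused_mgf_diff_le_at:
  fixes f g :: "'n qstate \<times> 'n qstate \<times> 'n qstate \<Rightarrow> complex"
  assumes "collapse_bounds C \<epsilon>" "integrable (S \<epsilon>) f" "integrable (S \<epsilon>) g"
    and "\<And>q a s. norm (f (q, a, s) - g (q, a, s)) \<le> c * \<epsilon> * (real (unused q a s k) * perp_weight \<epsilon> q)"
    and "0 \<le> c"
  shows "norm ((measure_pmf.expectation (S \<epsilon>) f - measure_pmf.expectation (S \<epsilon>) g) / complex_of_real \<epsilon>)
    \<le> c * sqrt \<epsilon> * (1 + C)"
proof -
  let ?uY = "\<lambda>(q, a, s). real (unused q a s k) * perp_weight \<epsilon> q"
  have \<epsilon>: "0 < \<epsilon>" using collapse_boundsD(1)[OF assms(1)] .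
  have "norm (measure_pmf.expectation (S \<epsilon>) f - measure_pmf.expectation (S \<epsilon>) g)
      = norm (measure_pmf.expectation (S \<epsilon>) (\<lambda>y. f y - g y))"
    using assms(2,3) by simp
  also have "\<dots> \<le> measure_pmf.expectation (S \<epsilon>) (\<lambda>y. c * \<epsilon> * ?uY y)"
    using expectation_unused_perp_weight_le(1)[OF assms(1)] assms(4)
    by (intro pmf_integral_dominated(2)) (auto simp: split_beta')
  also have "\<dots> \<le> c * \<epsilon> * (sqrt \<epsilon> * (1 + C))"
    using expectation_unused_perp_weight_le(2)[OF assms(1)] \<epsilon> assms(5)
    by (simp add: mult_left_mono)
  finally show ?thesis
    using \<epsilon> by (simp add: norm_divide divide_le_eq algebra_simps)
qed

lemma mgf_bounded:
  assumes "z \<in> {\<theta>t, proj_S_c \<theta>t}"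
  shows "\<exists>C. \<forall>\<^sub>F \<epsilon> in at_right 0.
    integrable (\<pi> \<epsilon>) (\<lambda>q. exp (complex_of_real \<epsilon> * inner_c z q)) \<and>
    norm (measure_pmf.expectation (\<pi> \<epsilon>) (\<lambda>q. exp (complex_of_real \<epsilon> * inner_c z q))) \<le> C"
proof -
  obtain C where "\<forall>\<^sub>F \<epsilon> in at_right 0. collapse_bounds C \<epsilon>"
    using eventually_collapse_bounds by blast
  then have "\<forall>\<^sub>F \<epsilon> in at_right 0.
      integrable (\<pi> \<epsilon>) (\<lambda>q. exp (complex_of_real \<epsilon> * inner_c z q)) \<and>
      norm (measure_pmf.expectation (\<pi> \<epsilon>) (\<lambda>q. exp (complex_of_real \<epsilon> * inner_c z q)))
        \<le> 1 + exponent_bound * (1 + C)"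
    by (rule eventually_mono) (rule mgf_bound_at[OF _ assms])
  then show ?thesis by blast
qed

lemma unused_mgf_bounded:
  assumes "z \<in> {\<theta>t, proj_S_c \<theta>t}"
  shows "\<exists>C. \<forall>\<^sub>F \<epsilon> in at_right 0.
    integrable (S \<epsilon>) (\<lambda>(q, a, s). of_nat (unused q a s k) * exp (complex_of_real \<epsilon> * inner_c z q)) \<and>
    norm (measure_pmf.expectation (S \<epsilon>)
      (\<lambda>(q, a, s). of_nat (unused q a s k) * exp (complex_of_real \<epsilon> * inner_c z q))) / \<epsilon> \<le> C"
proof -
  obtain C where "\<forall>\<^sub>F \<epsilon> in at_right 0. collapse_bounds C \<epsilon>"
    using eventually_collapse_bounds by blast
  then have "\<forall>\<^sub>F \<epsilon> in at_right 0.
      integrable (S \<epsilon>) (\<lambda>(q, a, s). of_nat (unused q a s k) * exp (complex_of_real \<epsilon> * inner_c z q)) \<and>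
      norm (measure_pmf.expectation (S \<epsilon>)
        (\<lambda>(q, a, s). of_nat (unused q a s k) * exp (complex_of_real \<epsilon> * inner_c z q))) / \<epsilon>
        \<le> 1 + exponent_bound * (1 + C)"
    by (rule eventually_mono) (rule unused_mgf_bound_at[OF _ assms])
  then show ?thesis by blast
qed

lemma mgf_theta_tilde_minus_theta_tendsto:
  "((\<lambda>\<epsilon>. measure_pmf.expectation (\<pi> \<epsilon>) (\<lambda>q. exp (complex_of_real \<epsilon> * inner_c \<theta>t q))
      - measure_pmf.expectation (\<pi> \<epsilon>) (\<lambda>q. exp (complex_of_real \<epsilon> * inner_c (proj_S_c \<theta>t) q)))
    \<longlongrightarrow> 0) (at_right 0)"
proof -
  obtain C where "\<forall>\<^sub>F \<epsilon> in at_right 0. collapse_bounds C \<epsilon>"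
    using eventually_collapse_bounds by blast
  then have "\<forall>\<^sub>F \<epsilon> in at_right 0.
      norm (measure_pmf.expectation (\<pi> \<epsilon>) (\<lambda>q. exp (complex_of_real \<epsilon> * inner_c \<theta>t q))
        - measure_pmf.expectation (\<pi> \<epsilon>) (\<lambda>q. exp (complex_of_real \<epsilon> * inner_c (proj_S_c \<theta>t) q)))
      \<le> 2 * exponent_bound * \<epsilon> * (1 + C)"
  proof eventually_elim
    case (elim \<epsilon>)
    then show ?case
      using norm_exp_theta_tilde_minus_theta_le exponent_bound_nonneg
      by (intro mgf_diff_le_at conjunct1[OF mgf_bound_at]) (auto simp: collapse_bounds_def mult_ac)
  qed
  moreover have "((\<lambda>\<epsilon>. 2 * exponent_bound * \<epsilon> * (1 + C)) \<longlongrightarrow> 0) (at_right 0)"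
    by (auto intro!: tendsto_eq_intros)
  ultimately show ?thesis by (rule Lim_null_comparison)
qed

lemma mgf_theta_minus_cone_tendsto:
  assumes R: "\<forall>\<epsilon>\<in>{0<..<1}. \<forall>q. (\<forall>l. 0 \<le> R \<epsilon> q l) \<and> Bvec (R \<epsilon> q) = closest_point coneK (qvec q)"
  shows "((\<lambda>\<epsilon>. measure_pmf.expectation (\<pi> \<epsilon>) (\<lambda>q. exp (complex_of_real \<epsilon> * inner_c (proj_S_c \<theta>t) q))
      - measure_pmf.expectation (\<pi> \<epsilon>)
          (\<lambda>q. exp (complex_of_real \<epsilon> * (\<Sum>l\<in>UNIV. dphi \<phi> l * complex_of_real (R \<epsilon> q l)))))
    \<longlongrightarrow> 0) (at_right 0)"
proof -
  obtain C where "\<forall>\<^sub>F \<epsilon> in at_right 0. collapse_bounds C \<epsilon>"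
    using eventually_collapse_bounds by blast
  then have "\<forall>\<^sub>F \<epsilon> in at_right 0.
      norm (measure_pmf.expectation (\<pi> \<epsilon>) (\<lambda>q. exp (complex_of_real \<epsilon> * inner_c (proj_S_c \<theta>t) q))
        - measure_pmf.expectation (\<pi> \<epsilon>)
            (\<lambda>q. exp (complex_of_real \<epsilon> * (\<Sum>l\<in>UNIV. dphi \<phi> l * complex_of_real (R \<epsilon> q l)))))
      \<le> exponent_bound * \<epsilon> * (1 + C)"
  proof eventually_elim
    case (elim \<epsilon>)
    then have \<epsilon>: "0 < \<epsilon>" "\<epsilon> < 1" by (simp_all add: collapse_bounds_def)
    then have coords: "cone_coords q (R \<epsilon> q)" for q
      using R by (simp add: cone_coords_def)
    show ?case
    proof (rule mgf_diff_le_at[OF elim conjunct1[OF mgf_bound_at[OF elim]]])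
      show "integrable (\<pi> \<epsilon>) (\<lambda>q. exp (complex_of_real \<epsilon> * (\<Sum>l\<in>UNIV. dphi \<phi> l * complex_of_real (R \<epsilon> q l))))"
        using coords \<epsilon> by (intro integrable_pmf_bounded[where B=1] norm_exp_dphi_sum_le_one)
          (auto simp: cone_coords_def)
    qed (use \<epsilon> coords norm_exp_inner_c_minus_dphi_sum_le exponent_bound_nonneg in \<open>auto simp: mult_ac\<close>)
  qed
  moreover have "((\<lambda>\<epsilon>. exponent_bound * \<epsilon> * (1 + C)) \<longlongrightarrow> 0) (at_right 0)"
    by (auto intro!: tendsto_eq_intros)
  ultimately show ?thesis by (rule Lim_null_comparison)
qed

lemma unused_mgf_theta_tilde_minus_theta_tendsto:
  "((\<lambda>\<epsilon>. (measure_pmf.expectation (S \<epsilon>)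
          (\<lambda>(q, a, s). of_nat (unused q a s k) * exp (complex_of_real \<epsilon> * inner_c \<theta>t q))
      - measure_pmf.expectation (S \<epsilon>)
          (\<lambda>(q, a, s). of_nat (unused q a s k) * exp (complex_of_real \<epsilon> * inner_c (proj_S_c \<theta>t) q)))
      / complex_of_real \<epsilon>)
    \<longlongrightarrow> 0) (at_right 0)"
proof -
  obtain C where "\<forall>\<^sub>F \<epsilon> in at_right 0. collapse_bounds C \<epsilon>"
    using eventually_collapse_bounds by blast
  then have "\<forall>\<^sub>F \<epsilon> in at_right 0.
      norm ((measure_pmf.expectation (S \<epsilon>)
          (\<lambda>(q, a, s). of_nat (unused q a s k) * exp (complex_of_real \<epsilon> * inner_c \<theta>t q))
        - measure_pmf.expectation (S \<epsilon>)
          (\<lambda>(q, a, s). of_nat (unused q a s k) * exp (complex_of_real \<epsilon> * inner_c (proj_S_c \<theta>t) q)))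
        / complex_of_real \<epsilon>)
      \<le> 2 * exponent_bound * sqrt \<epsilon> * (1 + C)"
  proof eventually_elim
    case (elim \<epsilon>)
    then have \<epsilon>: "0 < \<epsilon>" by (simp add: collapse_bounds_def)
    have "norm (of_nat (unused q a s k) * exp (complex_of_real \<epsilon> * inner_c \<theta>t q)
        - of_nat (unused q a s k) * exp (complex_of_real \<epsilon> * inner_c (proj_S_c \<theta>t) q))
      \<le> 2 * exponent_bound * \<epsilon> * (real (unused q a s k) * perp_weight \<epsilon> q)" for q a s
      using norm_exp_theta_tilde_minus_theta_le[of \<epsilon> q] \<epsilon>
      by (auto simp: unused_def norm_mult mult_ac simp flip: right_diff_distrib)
    then show ?case
      using exponent_bound_nonneg
      by (intro unused_mgf_diff_le_at[OF elim] conjunct1[OF unused_mgf_bound_at[OF elim]]) auto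
  qed
  moreover have "((\<lambda>\<epsilon>. 2 * exponent_bound * sqrt \<epsilon> * (1 + C)) \<longlongrightarrow> 0) (at_right 0)"
    by (auto intro!: tendsto_eq_intros)
  ultimately show ?thesis by (rule Lim_null_comparison)
qed

lemma unused_mgf_theta_minus_cone_tendsto:
  assumes R: "\<forall>\<epsilon>\<in>{0<..<1}. \<forall>q. (\<forall>l. 0 \<le> R \<epsilon> q l) \<and> Bvec (R \<epsilon> q) = closest_point coneK (qvec q)"
  shows "((\<lambda>\<epsilon>. (measure_pmf.expectation (S \<epsilon>)
          (\<lambda>(q, a, s). of_nat (unused q a s (i, j)) * exp (complex_of_real \<epsilon> * inner_c (proj_S_c \<theta>t) q))
      - measure_pmf.expectation (S \<epsilon>)
          (\<lambda>(q, a, s). of_nat (unused q a s (i, j)) *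
             exp (complex_of_real \<epsilon> * (\<Sum>l\<in>UNIV - {Inl i, Inr j}. dphi \<phi> l * complex_of_real (R \<epsilon> q l)))))
      / complex_of_real \<epsilon>)
    \<longlongrightarrow> 0) (at_right 0)"
proof -
  obtain C where "\<forall>\<^sub>F \<epsilon> in at_right 0. collapse_bounds C \<epsilon>"
    using eventually_collapse_bounds by blast
  then have "\<forall>\<^sub>F \<epsilon> in at_right 0.
      norm ((measure_pmf.expectation (S \<epsilon>)
          (\<lambda>(q, a, s). of_nat (unused q a s (i, j)) * exp (complex_of_real \<epsilon> * inner_c (proj_S_c \<theta>t) q))
        - measure_pmf.expectation (S \<epsilon>)
          (\<lambda>(q, a, s). of_nat (unused q a s (i, j)) *
             exp (complex_of_real \<epsilon> * (\<Sum>l\<in>UNIV - {Inl i, Inr j}. dphi \<phi> l * complex_of_real (R \<epsilon> q l)))))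
        / complex_of_real \<epsilon>)
      \<le> exponent_bound * sqrt \<epsilon> * (1 + C)"
  proof eventually_elim
    case (elim \<epsilon>)
    then have \<epsilon>: "0 < \<epsilon>" "\<epsilon> < 1" by (simp_all add: collapse_bounds_def)
    then have coords: "cone_coords q (R \<epsilon> q)" for q
      using R by (simp add: cone_coords_def)
    have "norm (of_nat (unused q a s (i, j)) * exp (complex_of_real \<epsilon> * inner_c (proj_S_c \<theta>t) q)
        - of_nat (unused q a s (i, j)) *
            exp (complex_of_real \<epsilon> * (\<Sum>l\<in>UNIV - {Inl i, Inr j}. dphi \<phi> l * complex_of_real (R \<epsilon> q l))))
      \<le> exponent_bound * \<epsilon> * (real (unused q a s (i, j)) * perp_weight \<epsilon> q)" for q a s
    proof (cases "unused q a s (i, j) = 1")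
      case True
      then have "q (i, j) = 0" by (rule unused_imp_empty)
      from norm_exp_inner_c_minus_dphi_sum_without_le[OF less_imp_le[OF \<epsilon>(1)] coords[of q] this]
      show ?thesis
        using True by (simp add: mult_ac)
    next
      case False
      then have "unused q a s (i, j) = 0"
        using unused_cases[of q a s "(i, j)"] by blast
      then show ?thesis by simp
    qed
    moreover have "integrable (S \<epsilon>) (\<lambda>(q, a, s). of_nat (unused q a s (i, j)) *
        exp (complex_of_real \<epsilon> * (\<Sum>l\<in>UNIV - {Inl i, Inr j}. dphi \<phi> l * complex_of_real (R \<epsilon> q l))))"
    proof (rule integrable_pmf_bounded[where B=1], clarsimp)
      fix q a s
      have "norm (exp (complex_of_real \<epsilon> *
          (\<Sum>l\<in>UNIV - {Inl i, Inr j}. dphi \<phi> l * complex_of_real (R \<epsilon> q l)))) \<le> 1"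
        using coords[of q] \<epsilon> by (intro norm_exp_dphi_sum_le_one) (auto simp: cone_coords_def)
      then show "norm (of_nat (unused q a s (i, j)) *
          exp (complex_of_real \<epsilon> * (\<Sum>l\<in>UNIV - {Inl i, Inr j}. dphi \<phi> l * complex_of_real (R \<epsilon> q l)))) \<le> 1"
        using unused_cases[of q a s "(i, j)"] by (auto simp: norm_mult)
    qed
    ultimately show ?case
      using exponent_bound_nonneg
      by (intro unused_mgf_diff_le_at[OF elim] conjunct1[OF unused_mgf_bound_at[OF elim]]) auto
  qed
  moreover have "((\<lambda>\<epsilon>. exponent_bound * sqrt \<epsilon> * (1 + C)) \<longlongrightarrow> 0) (at_right 0)"
    by (auto intro!: tendsto_eq_intros)
  ultimately show ?thesis by (rule Lim_null_comparison)
qed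

end

lemma ssc_transform_stationary_switch:
  fixes \<nu> :: "'n::finite \<times> 'n \<Rightarrow> real" and \<pi> :: "real \<Rightarrow> 'n qstate pmf"
  assumes theta_eq: "\<forall>k. proj_S_c \<theta>t k = \<phi> (Inl (fst k)) + \<phi> (Inr (snd k))"
    and phi_in_Phi: "\<forall>l. Re (dphi \<phi> l) \<le> 0"
    and sched: "\<forall>q. \<forall>s\<in>set_pmf (\<sigma> q). is_schedule s"
    and arr_bound: "\<forall>\<epsilon>\<in>{0<..<1}. \<forall>a\<in>set_pmf (A \<epsilon>). \<forall>k. a k \<le> amax"
    and arr_mean: "\<forall>\<epsilon>\<in>{0<..<1}. \<forall>k.
        measure_pmf.expectation (A \<epsilon>) (\<lambda>a. real (a k)) = (1 - \<epsilon>) * \<nu> k"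
    and nu_rows: "\<forall>i. (\<Sum>j\<in>UNIV. \<nu> (i, j)) = 1"
    and stationary: "\<forall>\<epsilon>\<in>{0<..<1}.
        map_pmf (\<lambda>(q, a, s). next_state q a s) (step_pmf (\<pi> \<epsilon>) (A \<epsilon>) \<sigma>) = \<pi> \<epsilon>"
    and ssc_exp: "\<forall>\<eta>::real. \<exists>\<epsilon>1>0. \<exists>C. \<forall>\<epsilon>. 0 < \<epsilon> \<and> \<epsilon> \<le> \<epsilon>1 \<and> \<epsilon> < 1 \<longrightarrow>
        integrable (measure_pmf (\<pi> \<epsilon>)) (\<lambda>q. exp (\<epsilon> * \<eta> * norm (q_perpK q))) \<and>
        measure_pmf.expectation (\<pi> \<epsilon>) (\<lambda>q. exp (\<epsilon> * \<eta> * norm (q_perpK q))) < C"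
    and ssc_mom: "\<forall>r::real. 1 \<le> r \<longrightarrow> (\<exists>C. \<forall>\<epsilon>\<in>{0<..<1}.
        integrable (measure_pmf (\<pi> \<epsilon>)) (\<lambda>q. norm (q_perpK q) powr r) \<and>
        measure_pmf.expectation (\<pi> \<epsilon>) (\<lambda>q. norm (q_perpK q) powr r) \<le> C)"
  shows "ssc_transform \<theta>t \<phi> \<pi> (\<lambda>\<epsilon>. step_pmf (\<pi> \<epsilon>) (A \<epsilon>) \<sigma>)"
proof unfold_locales
  show "map_pmf fst (step_pmf (\<pi> \<epsilon>) (A \<epsilon>) \<sigma>) = \<pi> \<epsilon>" for \<epsilon>
    by (rule map_fst_step_pmf)
  show "\<forall>\<^sub>F \<epsilon> in at_right 0. \<forall>k. measure_pmf.expectation (step_pmf (\<pi> \<epsilon>) (A \<epsilon>) \<sigma>)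
      (\<lambda>(q, a, s). real (unused q a s k)) \<le> \<epsilon>"
    using eventually_at_right_0_below[OF zero_less_one]
  proof eventually_elim
    case (elim \<epsilon>)
    then have "\<epsilon> \<in> {0<..<1}" by simp
    then have "measure_pmf.expectation (step_pmf (\<pi> \<epsilon>) (A \<epsilon>) \<sigma>)
        (\<lambda>(q, a, s). real (unused q a s (i, j))) \<le> \<epsilon>" for i j
      using arr_bound arr_mean stationary
      by (intro expectation_unused_le[OF sched _ _ nu_rows, where amax=amax]) auto
    then show ?case by simp
  qed
  show "\<exists>C. \<forall>\<^sub>F \<epsilon> in at_right 0. integrable (\<pi> \<epsilon>) (\<lambda>q. exp (\<epsilon> * \<eta> * norm (q_perpK q))) \<and>
      measure_pmf.expectation (\<pi> \<epsilon>) (\<lambda>q. exp (\<epsilon> * \<eta> * norm (q_perpK q))) \<le> C" for \<eta>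
  proof -
    obtain \<epsilon>1 C where "0 < \<epsilon>1" and C: "\<forall>\<epsilon>. 0 < \<epsilon> \<and> \<epsilon> \<le> \<epsilon>1 \<and> \<epsilon> < 1 \<longrightarrow>
        integrable (\<pi> \<epsilon>) (\<lambda>q. exp (\<epsilon> * \<eta> * norm (q_perpK q))) \<and>
        measure_pmf.expectation (\<pi> \<epsilon>) (\<lambda>q. exp (\<epsilon> * \<eta> * norm (q_perpK q))) < C"
      using ssc_exp by blast
    from eventually_at_right_0_below[of "min \<epsilon>1 1"] \<open>0 < \<epsilon>1\<close>
    have "\<forall>\<^sub>F \<epsilon> in at_right 0. 0 < \<epsilon> \<and> \<epsilon> \<le> \<epsilon>1 \<and> \<epsilon> < 1"
      by (auto elim!: eventually_mono)
    then have "\<forall>\<^sub>F \<epsilon> in at_right 0. integrable (\<pi> \<epsilon>) (\<lambda>q. exp (\<epsilon> * \<eta> * norm (q_perpK q))) \<and>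
        measure_pmf.expectation (\<pi> \<epsilon>) (\<lambda>q. exp (\<epsilon> * \<eta> * norm (q_perpK q))) \<le> C"
      by (rule eventually_mono) (use C in \<open>auto intro: less_imp_le\<close>)
    then show ?thesis by blast
  qed
  obtain C where "\<forall>\<epsilon>\<in>{0<..<1}. integrable (\<pi> \<epsilon>) (\<lambda>q. norm (q_perpK q) powr 4) \<and>
      measure_pmf.expectation (\<pi> \<epsilon>) (\<lambda>q. norm (q_perpK q) powr 4) \<le> C"
    using ssc_mom[rule_format, of 4] by auto
  with eventually_at_right_0_below[OF zero_less_one]
  show "\<exists>C. \<forall>\<^sub>F \<epsilon> in at_right 0. integrable (\<pi> \<epsilon>) (\<lambda>q. norm (q_perpK q) ^ 4) \<and>
      measure_pmf.expectation (\<pi> \<epsilon>) (\<lambda>q. norm (q_perpK q) ^ 4) \<le> C"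
    by (intro exI[of _ C]) (auto elim!: eventually_mono)
qed (use theta_eq phi_in_Phi in auto)

theorem lemma7:
  fixes \<nu> :: "'n::finite \<times> 'n \<Rightarrow> real" and amax :: nat
    and A :: "real \<Rightarrow> 'n qstate pmf"
    and \<sigma> :: "'n qstate \<Rightarrow> 'n qstate pmf"
    and \<pi> :: "real \<Rightarrow> 'n qstate pmf"
    and \<theta>t :: "'n \<times> 'n \<Rightarrow> complex"
    and \<phi> :: "'n + 'n \<Rightarrow> complex"
  assumes nu_pos: "\<forall>k. 0 < \<nu> k"
    and nu_rows: "\<forall>i. (\<Sum>j\<in>UNIV. \<nu> (i, j)) = 1"
    and nu_cols: "\<forall>j. (\<Sum>i\<in>UNIV. \<nu> (i, j)) = 1"
    and sched: "\<forall>q. \<forall>s\<in>set_pmf (\<sigma> q). is_schedule s"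
    and arr_bound: "\<forall>\<epsilon>\<in>{0<..<1}. \<forall>a\<in>set_pmf (A \<epsilon>). \<forall>k. a k \<le> amax"
    and arr_mean: "\<forall>\<epsilon>\<in>{0<..<1}. \<forall>k.
        measure_pmf.expectation (A \<epsilon>) (\<lambda>a. real (a k)) = (1 - \<epsilon>) * \<nu> k"
    and arr_cov: "\<forall>\<epsilon>\<in>{0<..<1}. \<forall>k k'. k \<noteq> k' \<longrightarrow>
        measure_pmf.expectation (A \<epsilon>) (\<lambda>a. real (a k) * real (a k')) =
        measure_pmf.expectation (A \<epsilon>) (\<lambda>a. real (a k)) *
        measure_pmf.expectation (A \<epsilon>) (\<lambda>a. real (a k'))"
    and stationary: "\<forall>\<epsilon>\<in>{0<..<1}.
        map_pmf (\<lambda>(q, a, s). next_state q a s) (step_pmf (\<pi> \<epsilon>) (A \<epsilon>) \<sigma>) = \<pi> \<epsilon>"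
    and ssc_exp: "\<forall>\<eta>::real. \<exists>\<epsilon>1>0. \<exists>C. \<forall>\<epsilon>. 0 < \<epsilon> \<and> \<epsilon> \<le> \<epsilon>1 \<and> \<epsilon> < 1 \<longrightarrow>
        integrable (measure_pmf (\<pi> \<epsilon>)) (\<lambda>q. exp (\<epsilon> * \<eta> * norm (q_perpK q))) \<and>
        measure_pmf.expectation (\<pi> \<epsilon>) (\<lambda>q. exp (\<epsilon> * \<eta> * norm (q_perpK q))) < C"
    and ssc_mom: "\<forall>r::real. 1 \<le> r \<longrightarrow> (\<exists>C. \<forall>\<epsilon>\<in>{0<..<1}.
        integrable (measure_pmf (\<pi> \<epsilon>)) (\<lambda>q. norm (q_perpK q) powr r) \<and>
        measure_pmf.expectation (\<pi> \<epsilon>) (\<lambda>q. norm (q_perpK q) powr r) \<le> C)"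
    and theta_eq: "\<forall>k. proj_S_c \<theta>t k = \<phi> (Inl (fst k)) + \<phi> (Inr (snd k))"
    and phi_in_Phi: "\<forall>l. Re (dphi \<phi> l) \<le> 0"
  shows
    "(\<forall>x\<in>{\<theta>t, proj_S_c \<theta>t}.
       (\<exists>C. \<forall>\<^sub>F \<epsilon> in at_right 0.
          integrable (measure_pmf (\<pi> \<epsilon>)) (\<lambda>q. exp (complex_of_real \<epsilon> * inner_c x q)) \<and>
          norm (measure_pmf.expectation (\<pi> \<epsilon>) (\<lambda>q. exp (complex_of_real \<epsilon> * inner_c x q))) \<le> C) \<and>
       (\<forall>k. \<exists>C. \<forall>\<^sub>F \<epsilon> in at_right 0.
          integrable (measure_pmf (step_pmf (\<pi> \<epsilon>) (A \<epsilon>) \<sigma>))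
            (\<lambda>(q, a, s). of_nat (unused q a s k) * exp (complex_of_real \<epsilon> * inner_c x q)) \<and>
          norm (measure_pmf.expectation (step_pmf (\<pi> \<epsilon>) (A \<epsilon>) \<sigma>)
            (\<lambda>(q, a, s). of_nat (unused q a s k) * exp (complex_of_real \<epsilon> * inner_c x q))) / \<epsilon> \<le> C))
     \<and>
     (\<forall>R :: real \<Rightarrow> 'n qstate \<Rightarrow> 'n + 'n \<Rightarrow> real.
       (\<forall>\<epsilon>\<in>{0<..<1}. \<forall>q. (\<forall>l. 0 \<le> R \<epsilon> q l) \<and> Bvec (R \<epsilon> q) = closest_point coneK (qvec q))
       \<longrightarrow>
       ((\<lambda>\<epsilon>. measure_pmf.expectation (\<pi> \<epsilon>) (\<lambda>q. exp (complex_of_real \<epsilon> * inner_c \<theta>t q))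
            - measure_pmf.expectation (\<pi> \<epsilon>) (\<lambda>q. exp (complex_of_real \<epsilon> * inner_c (proj_S_c \<theta>t) q)))
          \<longlongrightarrow> 0) (at_right 0) \<and>
       ((\<lambda>\<epsilon>. measure_pmf.expectation (\<pi> \<epsilon>) (\<lambda>q. exp (complex_of_real \<epsilon> * inner_c (proj_S_c \<theta>t) q))
            - measure_pmf.expectation (\<pi> \<epsilon>)
                (\<lambda>q. exp (complex_of_real \<epsilon> * (\<Sum>l\<in>UNIV. dphi \<phi> l * complex_of_real (R \<epsilon> q l)))))
          \<longlongrightarrow> 0) (at_right 0) \<and>
       (\<forall>i j.
         ((\<lambda>\<epsilon>. (measure_pmf.expectation (step_pmf (\<pi> \<epsilon>) (A \<epsilon>) \<sigma>)
                   (\<lambda>(q, a, s). of_nat (unused q a s (i, j)) * exp (complex_of_real \<epsilon> * inner_c \<theta>t q))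
                - measure_pmf.expectation (step_pmf (\<pi> \<epsilon>) (A \<epsilon>) \<sigma>)
                   (\<lambda>(q, a, s). of_nat (unused q a s (i, j)) *
                      exp (complex_of_real \<epsilon> * inner_c (proj_S_c \<theta>t) q))) / complex_of_real \<epsilon>)
            \<longlongrightarrow> 0) (at_right 0) \<and>
         ((\<lambda>\<epsilon>. (measure_pmf.expectation (step_pmf (\<pi> \<epsilon>) (A \<epsilon>) \<sigma>)
                   (\<lambda>(q, a, s). of_nat (unused q a s (i, j)) *
                      exp (complex_of_real \<epsilon> * inner_c (proj_S_c \<theta>t) q))
                - measure_pmf.expectation (step_pmf (\<pi> \<epsilon>) (A \<epsilon>) \<sigma>)
                   (\<lambda>(q, a, s). of_nat (unused q a s (i, j)) *
                      exp (complex_of_real \<epsilon> *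
                        (\<Sum>l\<in>UNIV - {Inl i, Inr j}. dphi \<phi> l * complex_of_real (R \<epsilon> q l))))) / complex_of_real \<epsilon>)
            \<longlongrightarrow> 0) (at_right 0)))"
proof -
  interpret ssc_transform \<theta>t \<phi> \<pi> "\<lambda>\<epsilon>. step_pmf (\<pi> \<epsilon>) (A \<epsilon>) \<sigma>"
    using theta_eq phi_in_Phi sched arr_bound arr_mean nu_rows stationary ssc_exp ssc_mom
    by (rule ssc_transform_stationary_switch)
  show ?thesis
    using mgf_bounded unused_mgf_bounded mgf_theta_tilde_minus_theta_tendsto mgf_theta_minus_cone_tendsto
      unused_mgf_theta_tilde_minus_theta_tendsto unused_mgf_theta_minus_cone_tendsto
    by blast
qed

end
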